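(* Let $0=x_1<\dots<x_N=1$ be a partition of $I=[0,1]$, let $\{q_n\}$ be a sequence in $(0,1]$ with $\lim q_n=1$, and let $\alpha_i$, $i\in\mathbb{N}_{N-1}$, be bounded functions on $I$ with $\|\alpha_i\|_\infty<1$. Let $\{\lambda_i\}_{i\ge1}$ be a sequence of distinct positive real numbers with $\inf_{i\ge1}\lambda_i>0$ and $\sum_{i=1}^\infty\frac1{\lambda_i}=\infty$. Then the set \[ S=\bigcup_{n=1}^\infty\bigcup_{m=1}^\infty\operatorname{span}\{1,(x^{\lambda_1})^{(q_n,\alpha)}_n,\dots,(x^{\lambda_m})^{(q_n,\alpha)}_n\} \] is dense in $C[0,1]$ with respect to the sup-norm.
   Context: For $q\in(0,1]$: $[k]_q=\frac{1-q^k}{1-q}$ ($q\ne1$), $[k]_1=k$, $q$-factorials, $\binom{n}{k}_q=\frac{[n]_q!}{[k]_q![n-k]_q!}$. On $[0,1]$ the quantum MKZ operator is $M_{n,q}h(x)=\prod_{j=0}^n(1-q^jx)\sum_{k\ge0}\binom{n+k}{k}_q x^k h\!\left(\frac{[k]_q}{[k+n]_q}\right)$ for $0\le x<1$, $M_{n,q}h(1)=h(1)$. Let $u_i(x)=a_ix+b_i$ be the affine maps with $u_i(0)=x_i$, $u_i(1)=x_{i+1}$, $i\in\mathbb{N}_{N-1}$. For $h\in C[0,1]$, $h^{(q,\alpha)}_n$ denotes the unique bounded function $G:[0,1]\to\mathbb{R}$ with $G(u_i(x))=h(u_i(x))+\alpha_i(x)(G(x)-M_{n,q}h(x))$ for all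 $x\in I$, $i\in\mathbb{N}_{N-1}$; $(x^{\lambda})^{(q,\alpha)}_n$ is this function for $h(x)=x^\lambda$. *)

theory Defs
  imports "HOL-Analysis.Analysis"
begin

definition qint :: "real \<Rightarrow> nat \<Rightarrow> real" where
  "qint q k = (if q = 1 then real k else (1 - q ^ k) / (1 - q))"

definition qfact :: "real \<Rightarrow> nat \<Rightarrow> real" where
  "qfact q n = (\<Prod>k=1..n. qint q k)"

definition qbinom :: "real \<Rightarrow> nat \<Rightarrow> nat \<Rightarrow> real" where
  "qbinom q n k = qfact q n / (qfact q k * qfact q (n - k))"

definition MKZ :: "nat \<Rightarrow> real \<Rightarrow> (real \<Rightarrow> real) \<Rightarrow> real \<Rightarrow> real" where
  "MKZ n q h x =
     (if x = 1 then h 1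
      else (\<Prod>j=0..n. 1 - q ^ j * x) *
           (\<Sum>k. qbinom q (n + k) k * x ^ k * h (qint q k / qint q (k + n))))"

definition affu :: "(nat \<Rightarrow> real) \<Rightarrow> nat \<Rightarrow> real \<Rightarrow> real" where
  "affu xs i t = (xs (Suc i) - xs i) * t + xs i"

definition fractal ::
  "nat \<Rightarrow> (nat \<Rightarrow> real) \<Rightarrow> (nat \<Rightarrow> real \<Rightarrow> real) \<Rightarrow> nat \<Rightarrow> real \<Rightarrow> (real \<Rightarrow> real) \<Rightarrow> real \<Rightarrow> real"
  where
  "fractal N xs alpha n q h =
     (THE G. bounded (G ` {0..1}) \<and> (\<forall>t. t \<notin> {0..1} \<longrightarrow> G t = 0) \<and>
        (\<forall>i\<in>{1..N-1}. \<forall>t\<in>{0..1}.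
           G (affu xs i t) = h (affu xs i t) + alpha i t * (G t - MKZ n q h t)))"

end

(*
  Two approximation steps are combined. By an elementary form of the Muntz theorem, every
  continuous f on [0,1] is a uniform limit of combinations of 1 and the powers t^lam_j:
  an integration trick in the style of Newman gives, for a power t^nu and distinct exponents
  e_k, combinations of t^nu and t^e_1, ..., t^e_n with sup-norm error at most
  prod_k |1 - nu/e_k|, and these products tend to 0 either because sum 1/lam_i diverges or
  because infinitely many lam_i cluster in a bounded interval. Second, M_{n,q_n} h -> h
  uniformly for continuous h, by the estimate |M h - h| <= eps + C x/[n]_q coming from the
  first two moments and [n]_{q_n} -> oo. The fractal function is h + E, where E is the fixed
  point of an affine contraction of ratio c = max |alpha_i| < 1 driven by h - M h, so it lies
  within c/(1-c) ||h - M h|| of h. Hence every t^lam_j is a uniform limit of its fractal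
  analogues, and a Muntz combination approximating f can be transferred to the fractal
  functions for large n.
*)
theory Submission
  imports Defs
begin

section \<open>A Muntz theorem on [0,1]\<close>

definition approx_by_span :: "(nat \<Rightarrow> real \<Rightarrow> real) \<Rightarrow> (real \<Rightarrow> real) \<Rightarrow> bool" where
  "approx_by_span b f \<longleftrightarrow> (\<forall>\<epsilon>>0. \<exists>m c. \<forall>t\<in>{0..1}.
      \<bar>f t - (c 0 + (\<Sum>j=1..m. c j * b j t))\<bar> < \<epsilon>)"

lemma approx_by_span_const: "approx_by_span b (\<lambda>t. a)"
  unfolding approx_by_span_def by (intro allI impI exI[of _ 0] exI[of _ "\<lambda>_. a"]) auto

lemma approx_by_span_basis:
  assumes "j \<ge> 1"
  shows "approx_by_span b (b j)"
  unfolding approx_by_span_def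
proof (intro allI impI exI[of _ j] exI[of _ "\<lambda>i. if i = j then 1 else 0"])
  have "(\<Sum>i=1..j. (if i = j then 1 else 0) * b i t) = (\<Sum>i\<in>{1..j}. if i = j then b i t else 0)" for t
    by (rule sum.cong) auto
  then have "(\<Sum>i=1..j. (if i = j then 1 else 0) * b i t) = b j t" for t
    using assms by simp
  then show "\<forall>t\<in>{0..1}. \<bar>b j t - ((if 0 = j then 1 else 0) +
      (\<Sum>i=1..j. (if i = j then 1 else 0) * b i t))\<bar> < \<epsilon>" if "\<epsilon> > 0" for \<epsilon>
    using assms that by simp
qed

lemma approx_by_span_cong:
  assumes "approx_by_span b f" and "\<And>t. t \<in> {0..1} \<Longrightarrow> f t = g t"
  shows "approx_by_span b g"
  using assms unfolding approx_by_span_def by simp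

lemma approx_by_span_uniform_limit:
  assumes "\<And>\<epsilon>. \<epsilon> > 0 \<Longrightarrow> \<exists>g. approx_by_span b g \<and> (\<forall>t\<in>{0..1}. \<bar>f t - g t\<bar> \<le> \<epsilon>)"
  shows "approx_by_span b f"
  unfolding approx_by_span_def
proof (intro allI impI)
  fix \<epsilon> :: real assume "\<epsilon> > 0"
  then obtain g where g: "approx_by_span b g" "\<forall>t\<in>{0..1}. \<bar>f t - g t\<bar> \<le> \<epsilon>/2"
    using assms[of "\<epsilon>/2"] by auto
  then obtain m c where mc: "\<forall>t\<in>{0..1}. \<bar>g t - (c 0 + (\<Sum>j=1..m. c j * b j t))\<bar> < \<epsilon>/2"
    using \<open>\<epsilon> > 0\<close> unfolding approx_by_span_def by (meson half_gt_zero)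
  have "\<bar>f t - (c 0 + (\<Sum>j=1..m. c j * b j t))\<bar> < \<epsilon>" if "t \<in> {0..1}" for t
  proof -
    have "\<bar>f t - g t\<bar> \<le> \<epsilon>/2" "\<bar>g t - (c 0 + (\<Sum>j=1..m. c j * b j t))\<bar> < \<epsilon>/2"
      using g(2) mc that by auto
    then show ?thesis by linarith
  qed
  then show "\<exists>m c. \<forall>t\<in>{0..1}. \<bar>f t - (c 0 + (\<Sum>j=1..m. c j * b j t))\<bar> < \<epsilon>" by blast
qed

lemma sum_pad_zero:
  fixes m M :: nat
  assumes "m \<le> M"
  shows "(\<Sum>j=1..M. (if j \<le> m then c j else 0) * x j) = (\<Sum>j=1..m. c j * (x j :: real))"
  by (rule sum.mono_neutral_cong_right) (use assms in auto)

lemma approx_by_span_add: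
  assumes f: "approx_by_span b f" and g: "approx_by_span b g"
  shows "approx_by_span b (\<lambda>t. f t + g t)"
  unfolding approx_by_span_def
proof (intro allI impI)
  fix \<epsilon> :: real assume "\<epsilon> > 0"
  then obtain m1 c1 m2 c2 where
    approx_f: "\<forall>t\<in>{0..1}. \<bar>f t - (c1 0 + (\<Sum>j=1..m1. c1 j * b j t))\<bar> < \<epsilon>/2" and
    approx_g: "\<forall>t\<in>{0..1}. \<bar>g t - (c2 0 + (\<Sum>j=1..m2. c2 j * b j t))\<bar> < \<epsilon>/2"
    using f g unfolding approx_by_span_def by (meson half_gt_zero)
  define c where "c j = (if j \<le> m1 then c1 j else 0) + (if j \<le> m2 then c2 j else 0)" for j
  have sum_c: "(\<Sum>j=1..max m1 m2. c j * b j t) = (\<Sum>j=1..m1. c1 j * b j t) + (\<Sum>j=1..m2. c2 j * b j t)" for t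
    unfolding c_def distrib_right sum.distrib
    by (simp only: sum_pad_zero[OF max.cobounded1] sum_pad_zero[OF max.cobounded2])
  have "\<bar>f t + g t - (c 0 + (\<Sum>j=1..max m1 m2. c j * b j t))\<bar> < \<epsilon>" if "t \<in> {0..1}" for t
  proof -
    let ?d1 = "f t - (c1 0 + (\<Sum>j=1..m1. c1 j * b j t))"
    let ?d2 = "g t - (c2 0 + (\<Sum>j=1..m2. c2 j * b j t))"
    have "f t + g t - (c 0 + (\<Sum>j=1..max m1 m2. c j * b j t)) = ?d1 + ?d2"
      unfolding sum_c by (simp add: c_def)
    moreover have "\<bar>?d1\<bar> < \<epsilon>/2" "\<bar>?d2\<bar> < \<epsilon>/2"
      using approx_f approx_g that by auto
    ultimately show ?thesis
      using abs_triangle_ineq[of ?d1 ?d2] by linarith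
  qed
  then show "\<exists>m c. \<forall>t\<in>{0..1}. \<bar>f t + g t - (c 0 + (\<Sum>j=1..m. c j * b j t))\<bar> < \<epsilon>" by blast
qed

lemma approx_by_span_scale:
  assumes f: "approx_by_span b f"
  shows "approx_by_span b (\<lambda>t. a * f t)"
proof (cases "a = 0")
  case True
  then show ?thesis using approx_by_span_const[of b 0] by simp
next
  case False
  show ?thesis
    unfolding approx_by_span_def
  proof (intro allI impI)
    fix \<epsilon> :: real assume "\<epsilon> > 0"
    then have "\<epsilon> / \<bar>a\<bar> > 0" using False by simp
    then obtain m c where approx_f: "\<forall>t\<in>{0..1}. \<bar>f t - (c 0 + (\<Sum>j=1..m. c j * b j t))\<bar> < \<epsilon> / \<bar>a\<bar>"
      using f unfolding approx_by_span_def by blast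
    have "\<bar>a * f t - (a * c 0 + (\<Sum>j=1..m. (a * c j) * b j t))\<bar> < \<epsilon>" if "t \<in> {0..1}" for t
    proof -
      have "\<bar>a * f t - (a * c 0 + (\<Sum>j=1..m. (a * c j) * b j t))\<bar>
          = \<bar>a\<bar> * \<bar>f t - (c 0 + (\<Sum>j=1..m. c j * b j t))\<bar>"
        by (simp add: abs_mult[symmetric] algebra_simps sum_distrib_left)
      also have "\<dots> < \<bar>a\<bar> * (\<epsilon> / \<bar>a\<bar>)"
        using approx_f that False by (intro mult_strict_left_mono) auto
      also have "\<dots> = \<epsilon>"
        using False by simp
      finally show ?thesis .
    qed
    then show "\<exists>m c. \<forall>t\<in>{0..1}. \<bar>a * f t - (c 0 + (\<Sum>j=1..m. c j * b j t))\<bar> < \<epsilon>"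
      by (intro exI[of _ m] exI[of _ "\<lambda>j. a * c j"]) simp
  qed
qed

lemma approx_by_span_sum:
  assumes "finite K" and "\<And>k. k \<in> K \<Longrightarrow> approx_by_span b (g k)"
  shows "approx_by_span b (\<lambda>t. \<Sum>k\<in>K. g k t)"
  using assms
  by (induction K rule: finite_induct) (auto intro: approx_by_span_const approx_by_span_add)

lemma abs_le_if_derivative_dominated:
  fixes g h :: "real \<Rightarrow> real"
  assumes "a \<le> b" and "g b = 0" and "h b = 0"
    and g': "\<And>y. a \<le> y \<Longrightarrow> y \<le> b \<Longrightarrow> (g has_real_derivative g' y) (at y)"
    and h': "\<And>y. a \<le> y \<Longrightarrow> y \<le> b \<Longrightarrow> (h has_real_derivative - h' y) (at y)"
    and dominated: "\<And>y. a \<le> y \<Longrightarrow> y \<le> b \<Longrightarrow> \<bar>g' y\<bar> \<le> h' y"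
  shows "\<bar>g a\<bar> \<le> h a"
proof -
  have "0 \<le> h a + \<sigma> * g a" if "\<bar>\<sigma>\<bar> = 1" for \<sigma>
  proof -
    have "h b + \<sigma> * g b \<le> h a + \<sigma> * g a"
    proof (rule DERIV_nonpos_imp_nonincreasing[OF \<open>a \<le> b\<close>])
      fix y assume y: "a \<le> y" "y \<le> b"
      have "\<sigma> * g' y \<le> \<bar>\<sigma> * g' y\<bar>" by (rule abs_ge_self)
      also have "\<dots> = \<bar>g' y\<bar>" using that by (simp add: abs_mult)
      also have "\<dots> \<le> h' y" by (rule dominated[OF y])
      finally have "- h' y + \<sigma> * g' y \<le> 0" by simp
      moreover have "((\<lambda>y. h y + \<sigma> * g y) has_real_derivative - h' y + \<sigma> * g' y) (at y)"
        using g'[OF y] h'[OF y] by (intro DERIV_add DERIV_cmult)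
      ultimately show "\<exists>d. ((\<lambda>y. h y + \<sigma> * g y) has_real_derivative d) (at y) \<and> d \<le> 0"
        by blast
    qed
    then show ?thesis using \<open>g b = 0\<close> \<open>h b = 0\<close> by simp
  qed
  from this[of 1] this[of "-1"] show ?thesis by (simp add: abs_le_iff)
qed

text \<open>The sum equals \<open>x^l\<close> times the integral of \<open>y^(-l-1) P(y)\<close> over \<open>[x, 1]\<close>, where
  \<open>P(y) = \<Sum>k. b k * y^(E k)\<close>; instead of integrating we compare its antiderivative with
  that of \<open>y^(-l-1) M\<close>.\<close>
lemma powr_sum_antiderivative_bound:
  fixes b E :: "nat \<Rightarrow> real"
  assumes "finite K" and l: "l > 0" and E_ne: "\<And>k. k \<in> K \<Longrightarrow> E k \<noteq> l"
    and bound: "\<And>y. 0 < y \<Longrightarrow> y \<le> 1 \<Longrightarrow> \<bar>\<Sum>k\<in>K. b k * y powr E k\<bar> \<le> M"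
    and x: "0 < x" "x \<le> 1"
  shows "\<bar>\<Sum>k\<in>K. b k / (l - E k) * (x powr E k - x powr l)\<bar> \<le> M / l"
proof -
  define P where "P y = (\<Sum>k\<in>K. b k * y powr E k)" for y
  define g where "g y = (\<Sum>k\<in>K. b k / (l - E k) * (y powr (E k - l) - 1))" for y
  define h where "h y = M * (y powr (- l) - 1) / l" for y
  have M: "M \<ge> 0"
    using bound[of 1] by (meson abs_ge_zero order_trans zero_less_one order_refl)
  have g_deriv: "(g has_real_derivative - (y powr (- l - 1) * P y)) (at y)" if "y > 0" for y
  proof -
    have "b k / (l - E k) * ((E k - l) * y powr (E k - l - 1)) = - (y powr (- l - 1) * (b k * y powr E k))"
      if "k \<in> K" for k
    proof -
      have "y powr (E k - l - 1) = y powr (- l - 1 + E k)" by (simp add: algebra_simps)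
      also have "\<dots> = y powr (- l - 1) * y powr E k" by (rule powr_add)
      finally show ?thesis using E_ne[OF that] by (simp add: field_simps)
    qed
    then have "(\<Sum>k\<in>K. b k / (l - E k) * ((E k - l) * y powr (E k - l - 1))) = - (y powr (- l - 1) * P y)"
      unfolding P_def by (simp add: sum_distrib_left sum_negf[symmetric])
    moreover have "(g has_real_derivative
        (\<Sum>k\<in>K. b k / (l - E k) * ((E k - l) * y powr (E k - l - 1)))) (at y)"
      unfolding g_def using that \<open>finite K\<close>
      by (auto intro!: derivative_eq_intros DERIV_sum has_real_derivative_powr dest: E_ne)
    ultimately show ?thesis by simp
  qed
  have h_deriv: "(h has_real_derivative - (y powr (- l - 1) * M)) (at y)" if "y > 0" for y
  proof -
    have "(h has_real_derivative M * ((- l) * y powr (- l - 1)) / l) (at y)"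
      unfolding h_def using that by (auto intro!: derivative_eq_intros has_real_derivative_powr)
    then show ?thesis using l by (simp add: mult.commute)
  qed
  have "\<bar>g x\<bar> \<le> h x"
  proof (rule abs_le_if_derivative_dominated[OF x(2),
        where g' = "\<lambda>y. - (y powr (- l - 1) * P y)" and h' = "\<lambda>y. y powr (- l - 1) * M"])
    fix y assume "x \<le> y" "y \<le> 1"
    then have "y > 0" using x by simp
    then show "(g has_real_derivative - (y powr (- l - 1) * P y)) (at y)"
      and "(h has_real_derivative - (y powr (- l - 1) * M)) (at y)"
      and "\<bar>- (y powr (- l - 1) * P y)\<bar> \<le> y powr (- l - 1) * M"
      using g_deriv h_deriv bound[OF \<open>y > 0\<close> \<open>y \<le> 1\<close>] by (simp_all add: abs_mult P_def mult_left_mono)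
  qed (simp_all add: g_def h_def)
  then have "\<bar>x powr l * g x\<bar> \<le> x powr l * h x"
    using x by (simp add: abs_mult mult_left_mono)
  also have "x powr l * h x = M * (1 - x powr l) / l"
    using x l by (simp add: h_def powr_minus field_simps)
  also have "\<dots> \<le> M / l"
    using M l x by (simp add: divide_right_mono mult_left_le)
  finally have "\<bar>x powr l * g x\<bar> \<le> M / l" .
  moreover have "(\<Sum>k\<in>K. b k / (l - E k) * (x powr E k - x powr l)) = x powr l * g x"
    unfolding g_def sum_distrib_left
  proof (rule sum.cong[OF refl])
    fix k assume "k \<in> K"
    have "x powr E k = x powr l * x powr (E k - l)" by (simp add: powr_add[symmetric])
    then show "b k / (l - E k) * (x powr E k - x powr l)
        = x powr l * (b k / (l - E k) * (x powr (E k - l) - 1))"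
      by (simp add: algebra_simps)
  qed
  ultimately show ?thesis by simp
qed

text \<open>Induction on \<open>n\<close>: the operator of the previous lemma with \<open>l = E (n + 1)\<close>, rescaled by
  \<open>l - E 0\<close> so that the coefficient of \<open>x^(E 0)\<close> stays \<open>1\<close>, adds the exponent \<open>E (n + 1)\<close>
  at the cost of the factor \<open>\<bar>1 - E 0 / l\<bar>\<close>.\<close>
lemma exists_powr_combination_small:
  fixes E :: "nat \<Rightarrow> real"
  assumes pos: "\<And>k. E k > 0" and inj: "inj E"
  shows "\<exists>b. b 0 = 1 \<and> (\<forall>x. 0 < x \<longrightarrow> x \<le> 1 \<longrightarrow>
           \<bar>\<Sum>k=0..n. b k * x powr E k\<bar> \<le> (\<Prod>k=1..n. \<bar>1 - E 0 / E k\<bar>))"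
proof (induction n)
  case 0
  show ?case using pos[of 0] by (intro exI[of _ "\<lambda>_. 1"]) (auto intro!: powr_le1)
next
  case (Suc n)
  then obtain b where b0: "b 0 = 1" and bound: "\<And>x. 0 < x \<Longrightarrow> x \<le> 1 \<Longrightarrow>
           \<bar>\<Sum>k=0..n. b k * x powr E k\<bar> \<le> (\<Prod>k=1..n. \<bar>1 - E 0 / E k\<bar>)" by blast
  define l where "l = E (Suc n)"
  have l: "l > 0" using pos by (simp add: l_def)
  have E_ne: "E k \<noteq> l" if "k \<in> {0..n}" for k
    using that inj unfolding l_def inj_def by fastforce
  define b' where "b' k = (if k \<le> n then (l - E 0) * b k / (l - E k)
      else - (\<Sum>j=0..n. (l - E 0) * b j / (l - E j)))" for k
  have "b' 0 = 1" using E_ne[of 0] b0 by (simp add: b'_def)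
  moreover have "\<bar>\<Sum>k=0..Suc n. b' k * x powr E k\<bar> \<le> (\<Prod>k=1..Suc n. \<bar>1 - E 0 / E k\<bar>)"
    if x: "0 < x" "x \<le> 1" for x
  proof -
    have "(\<Sum>k=0..Suc n. b' k * x powr E k)
        = (\<Sum>k=0..n. (l - E 0) * b k / (l - E k) * x powr E k)
          - (\<Sum>j=0..n. (l - E 0) * b j / (l - E j)) * x powr l"
      by (simp add: b'_def l_def)
    also have "\<dots> = (l - E 0) * (\<Sum>k=0..n. b k / (l - E k) * (x powr E k - x powr l))"
      by (simp add: sum_distrib_left sum_distrib_right sum_subtractf[symmetric] algebra_simps)
    finally have "\<bar>\<Sum>k=0..Suc n. b' k * x powr E k\<bar>
        = \<bar>l - E 0\<bar> * \<bar>\<Sum>k=0..n. b k / (l - E k) * (x powr E k - x powr l)\<bar>"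
      by (simp add: abs_mult)
    also have "\<dots> \<le> \<bar>l - E 0\<bar> * ((\<Prod>k=1..n. \<bar>1 - E 0 / E k\<bar>) / l)"
      by (intro mult_left_mono powr_sum_antiderivative_bound[OF _ l E_ne _ x]) (use bound in auto)
    also have "\<dots> = \<bar>1 - E 0 / l\<bar> * (\<Prod>k=1..n. \<bar>1 - E 0 / E k\<bar>)"
    proof -
      have "1 - E 0 / l = (l - E 0) / l" using l by (simp add: diff_divide_distrib)
      then show ?thesis using l by simp
    qed
    also have "\<dots> = (\<Prod>k=1..Suc n. \<bar>1 - E 0 / E k\<bar>)"
      by (simp add: l_def mult.commute)
    finally show ?thesis .
  qed
  ultimately show ?case by blast
qed

lemma approx_by_span_powr_if_products_vanish:
  fixes e :: "nat \<Rightarrow> real"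
  assumes \<mu>: "\<mu> > 0" and e_pos: "\<And>k. e k > 0" and inj: "inj e" and e_ne: "\<And>k. e k \<noteq> \<mu>"
    and approx_e: "\<And>k. approx_by_span b (\<lambda>t. t powr e k)"
    and small: "\<And>\<epsilon>. \<epsilon> > 0 \<Longrightarrow> \<exists>n. (\<Prod>k<n. \<bar>1 - \<mu> / e k\<bar>) < \<epsilon>"
  shows "approx_by_span b (\<lambda>t. t powr \<mu>)"
proof (rule approx_by_span_uniform_limit)
  fix \<epsilon> :: real assume "\<epsilon> > 0"
  then obtain n where n: "(\<Prod>k<n. \<bar>1 - \<mu> / e k\<bar>) < \<epsilon>" using small by blast
  define E where "E k = (if k = 0 then \<mu> else e (k - 1))" for k
  have "E k > 0" for k using \<mu> e_pos by (simp add: E_def)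
  moreover have "inj E"
    unfolding inj_def E_def using e_ne by (auto simp: inj_eq[OF inj])
  ultimately obtain c where c0: "c 0 = 1" and c_bound: "\<And>x. 0 < x \<Longrightarrow> x \<le> 1 \<Longrightarrow>
      \<bar>\<Sum>k=0..n. c k * x powr E k\<bar> \<le> (\<Prod>k=1..n. \<bar>1 - E 0 / E k\<bar>)"
    using exists_powr_combination_small by blast
  have prod_E: "(\<Prod>k=1..n. \<bar>1 - E 0 / E k\<bar>) = (\<Prod>k<n. \<bar>1 - \<mu> / e k\<bar>)"
    unfolding One_nat_def prod.atLeast1_atMost_eq by (simp add: E_def)
  define g where "g t = (\<Sum>k<n. - c (Suc k) * t powr e k)" for t
  have "approx_by_span b g"
    unfolding g_def by (intro approx_by_span_sum approx_by_span_scale approx_e) simp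
  moreover have "\<bar>t powr \<mu> - g t\<bar> \<le> \<epsilon>" if t: "t \<in> {0..1}" for t
  proof (cases "t = 0")
    case True
    then show ?thesis using \<open>\<epsilon> > 0\<close> by (simp add: g_def)
  next
    case False
    have "(\<Sum>k=0..n. c k * t powr E k) = c 0 * t powr E 0 + (\<Sum>k=Suc 0..n. c k * t powr E k)"
      by (rule sum.atLeast_Suc_atMost) simp
    also have "(\<Sum>k=Suc 0..n. c k * t powr E k) = (\<Sum>k<n. c (Suc k) * t powr e k)"
      unfolding sum.atLeast1_atMost_eq by (simp add: E_def)
    finally have "t powr \<mu> - g t = (\<Sum>k=0..n. c k * t powr E k)"
      by (simp add: g_def c0 E_def sum_negf)
    then show ?thesis using c_bound[of t] t False prod_E n by auto
  qed
  ultimately show "\<exists>g. approx_by_span b g \<and> (\<forall>t\<in>{0..1}. \<bar>t powr \<mu> - g t\<bar> \<le> \<epsilon>)"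
    by blast
qed

lemma approx_by_span_powr_near_cluster:
  fixes e :: "nat \<Rightarrow> real"
  assumes a: "0 < a" and inj: "inj e" and e_range: "\<And>k. a \<le> e k \<and> e k \<le> B"
    and approx_e: "\<And>k. approx_by_span b (\<lambda>t. t powr e k)"
    and \<nu>: "0 < \<nu>" "\<nu> < 2 * a"
  shows "approx_by_span b (\<lambda>t. t powr \<nu>)"
proof (cases "\<nu> \<in> range e")
  case True
  then show ?thesis using approx_e by auto
next
  case False
  define \<rho> where "\<rho> = max (1 - \<nu> / B) (\<nu> / a - 1)"
  have "a \<le> B" using e_range[of 0] by simp
  have "\<rho> < 1"
  proof -
    have "\<nu> / B > 0" using \<nu> a \<open>a \<le> B\<close> by simp
    moreover have "\<nu> / a < 2" using \<nu> a by (simp add: divide_less_eq)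
    ultimately show ?thesis unfolding \<rho>_def by linarith
  qed
  have factor: "\<bar>1 - \<nu> / e k\<bar> \<le> \<rho>" for k
  proof (cases "\<nu> \<le> e k")
    case True
    have "\<nu> / B \<le> \<nu> / e k" using e_range[of k] a \<nu> by (simp add: frac_le)
    moreover have "\<nu> / e k \<le> 1" using True e_range[of k] a by simp
    ultimately show ?thesis unfolding \<rho>_def by (simp add: abs_if)
  next
    case False
    have "\<nu> / e k \<le> \<nu> / a" using e_range[of k] a \<nu> by (simp add: frac_le)
    moreover have "\<nu> / e k > 1" using False e_range[of k] a by (simp add: less_divide_eq)
    ultimately show ?thesis unfolding \<rho>_def by (simp add: abs_if)
  qed
  show ?thesis
  proof (rule approx_by_span_powr_if_products_vanish[OF \<nu>(1) _ inj _ approx_e])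
    show "e k > 0" for k using e_range[of k] a by linarith
    show "e k \<noteq> \<nu>" for k using False by auto
    fix \<epsilon> :: real assume "\<epsilon> > 0"
    obtain n where "\<rho> ^ n < \<epsilon>" using real_arch_pow_inv[OF \<open>\<epsilon> > 0\<close> \<open>\<rho> < 1\<close>] by blast
    moreover have "(\<Prod>k<n. \<bar>1 - \<nu> / e k\<bar>) \<le> \<rho> ^ n"
      using prod_mono[of "{..<n}" "\<lambda>k. \<bar>1 - \<nu> / e k\<bar>" "\<lambda>_. \<rho>"] factor by simp
    ultimately show "\<exists>n. (\<Prod>k<n. \<bar>1 - \<nu> / e k\<bar>) < \<epsilon>" by (blast intro: le_less_trans)
  qed
qed

lemma approx_by_span_powr_extend:
  assumes a: "a > 0" and below: "\<And>\<mu>. 0 < \<mu> \<Longrightarrow> \<mu> < a \<Longrightarrow> approx_by_span b (\<lambda>t. t powr \<mu>)"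
    and \<nu>: "0 < \<nu>" "\<nu> < 3 * a / 2"
  shows "approx_by_span b (\<lambda>t. t powr \<nu>)"
proof -
  define e where "e k = a - a / (4 * (real k + 1))" for k
  have e_range: "3 * a / 4 \<le> e k \<and> e k < a" for k
  proof -
    have "a / (4 * (real k + 1)) \<le> a / 4" using a by (intro divide_left_mono) auto
    moreover have "a / (4 * (real k + 1)) > 0" using a by simp
    ultimately show ?thesis unfolding e_def by linarith
  qed
  have "strict_mono e"
    unfolding strict_mono_def e_def using a by (simp add: frac_less2)
  then have "inj e" by (rule strict_mono_imp_inj_on)
  show ?thesis
  proof (rule approx_by_span_powr_near_cluster[of "3 * a / 4" e a])
    show "approx_by_span b (\<lambda>t. t powr e k)" for k
      using below e_range[of k] a by simp
  qed (use a \<nu> e_range \<open>inj e\<close> in \<open>auto intro: less_imp_le\<close>)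
qed

text \<open>Starting from the exponents in \<open>(0, 2 \<delta>)\<close>, each application of the previous lemma
  enlarges the interval of approximable exponents by the factor \<open>3/2\<close>.\<close>
lemma approx_by_span_powr_of_bounded_exponents:
  fixes e :: "nat \<Rightarrow> real"
  assumes \<delta>: "\<delta> > 0" and inj: "inj e" and e_range: "\<And>k. \<delta> \<le> e k \<and> e k \<le> B"
    and approx_e: "\<And>k. approx_by_span b (\<lambda>t. t powr e k)"
    and \<nu>: "\<nu> > 0"
  shows "approx_by_span b (\<lambda>t. t powr \<nu>)"
proof -
  have "\<forall>\<mu>. 0 < \<mu> \<and> \<mu> < 2 * \<delta> * (3/2) ^ k \<longrightarrow> approx_by_span b (\<lambda>t. t powr \<mu>)" for k
  proof (induction k)
    case 0
    then show ?case using approx_by_span_powr_near_cluster[OF \<delta> inj e_range approx_e] by simp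
  next
    case (Suc k)
    have "2 * \<delta> * (3/2) ^ k > 0" using \<delta> by simp
    note extend = approx_by_span_powr_extend[OF this]
    have "2 * \<delta> * (3/2) ^ Suc k = 3 * (2 * \<delta> * (3/2) ^ k) / 2" by simp
    then show ?case using extend Suc.IH by metis
  qed
  moreover obtain k where "\<nu> / (2 * \<delta>) < (3/2) ^ k" using real_arch_pow[of "3/2"] by auto
  then have "\<nu> < 2 * \<delta> * (3/2) ^ k" using \<delta> by (simp add: divide_less_eq mult.commute)
  ultimately show ?thesis using \<nu> by blast
qed

lemma approx_by_span_powr_of_divergent_exponents:
  fixes e :: "nat \<Rightarrow> real"
  assumes \<nu>: "\<nu> > 0" and inj: "inj e" and e_gt: "\<And>k. e k > \<nu>"
    and approx_e: "\<And>k. approx_by_span b (\<lambda>t. t powr e k)"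
    and diverge: "\<not> summable (\<lambda>k. 1 / e k)"
  shows "approx_by_span b (\<lambda>t. t powr \<nu>)"
proof (rule approx_by_span_powr_if_products_vanish[OF \<nu> _ inj _ approx_e])
  show e_pos: "e k > 0" for k using e_gt[of k] \<nu> by linarith
  show "e k \<noteq> \<nu>" for k using e_gt[of k] by simp
  fix \<epsilon> :: real assume "\<epsilon> > 0"
  have "0 \<le> 1 / e k" for k using e_pos[of k] by simp
  then have "\<not> (\<forall>n. (\<Sum>k<n. 1 / e k) \<le> - ln \<epsilon> / \<nu>)"
    using summableI_nonneg_bounded[of "\<lambda>k. 1 / e k"] diverge by blast
  then obtain n where "(\<Sum>k<n. 1 / e k) > - ln \<epsilon> / \<nu>" by (auto simp: not_le)
  then have n: "- ln \<epsilon> < (\<Sum>k<n. 1 / e k) * \<nu>"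
    using pos_divide_less_eq[OF \<nu>] by blast
  have "(\<Prod>k<n. \<bar>1 - \<nu> / e k\<bar>) \<le> (\<Prod>k<n. exp (- (\<nu> * (1 / e k))))"
  proof (rule prod_mono)
    fix k
    have "0 < \<nu> / e k" "\<nu> / e k < 1" using e_gt[of k] \<nu> by (auto simp: divide_less_eq)
    moreover have "1 + - (\<nu> / e k) \<le> exp (- (\<nu> / e k))" by (rule exp_ge_add_one_self)
    ultimately show "0 \<le> \<bar>1 - \<nu> / e k\<bar> \<and> \<bar>1 - \<nu> / e k\<bar> \<le> exp (- (\<nu> * (1 / e k)))" by simp
  qed
  also have "\<dots> = exp (- (\<nu> * (\<Sum>k<n. 1 / e k)))"
    by (simp add: exp_sum[symmetric] sum_distrib_left sum_negf)
  also have "\<dots> < exp (ln \<epsilon>)"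
    using n by (simp add: mult.commute)
  also have "\<dots> = \<epsilon>" using \<open>\<epsilon> > 0\<close> by simp
  finally show "\<exists>n. (\<Prod>k<n. \<bar>1 - \<nu> / e k\<bar>) < \<epsilon>" by blast
qed

text \<open>Either infinitely many exponents lie in a bounded interval, or all but finitely many exceed
  \<open>\<nu>\<close> and the divergence of \<open>\<Sum> 1 / lam i\<close> is carried by that tail.\<close>
lemma approx_by_span_muntz_powr:
  fixes lam :: "nat \<Rightarrow> real"
  assumes lam_distinct: "inj_on lam {1..}" and lam_pos: "\<And>i. i \<ge> 1 \<Longrightarrow> lam i > 0"
    and lam_inf: "\<exists>\<delta>>0. \<forall>i\<ge>1. lam i \<ge> \<delta>" and lam_div: "\<not> summable (\<lambda>i. 1 / lam (Suc i))"
    and \<nu>: "\<nu> > 0"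
  shows "approx_by_span (\<lambda>j t. t powr lam j) (\<lambda>t. t powr \<nu>)"
proof (cases "\<exists>B. infinite {i. 1 \<le> i \<and> lam i \<le> B}")
  case True
  then obtain B where "infinite {i. 1 \<le> i \<and> lam i \<le> B}" by blast
  then obtain f :: "nat \<Rightarrow> nat" where f: "inj f" "range f \<subseteq> {i. 1 \<le> i \<and> lam i \<le> B}"
    by (auto simp: infinite_iff_countable_subset)
  then have f_mem: "f k \<ge> 1" "lam (f k) \<le> B" for k by auto
  obtain \<delta> where \<delta>: "\<delta> > 0" "\<And>i. i \<ge> 1 \<Longrightarrow> lam i \<ge> \<delta>" using lam_inf by blast
  have "inj (\<lambda>k. lam (f k))"
  proof (rule injI)
    fix k k' assume "lam (f k) = lam (f k')"
    then have "f k = f k'" by (rule inj_onD[OF lam_distinct]) (use f_mem in auto)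
    then show "k = k'" using f(1) by (simp add: inj_eq)
  qed
  then show ?thesis
  proof (rule approx_by_span_powr_of_bounded_exponents[OF \<delta>(1) _ _ _ \<nu>])
    show "\<delta> \<le> lam (f k) \<and> lam (f k) \<le> B" for k using \<delta>(2)[OF f_mem(1)] f_mem(2) by simp
    show "approx_by_span (\<lambda>j t. t powr lam j) (\<lambda>t. t powr lam (f k))" for k
      using approx_by_span_basis[OF f_mem(1), where b = "\<lambda>j t. t powr lam j"] by simp
  qed
next
  case False
  then have fin: "finite {i. 1 \<le> i \<and> lam i \<le> \<nu>}" by blast
  define K where "K = Max (insert 0 {i. 1 \<le> i \<and> lam i \<le> \<nu>})"
  have lam_gt: "lam (Suc (k + K)) > \<nu>" for k
  proof (rule ccontr)
    assume "\<not> lam (Suc (k + K)) > \<nu>"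
    then have "Suc (k + K) \<in> insert 0 {i. 1 \<le> i \<and> lam i \<le> \<nu>}" by simp
    then have "Suc (k + K) \<le> K" unfolding K_def using fin by (intro Max_ge) simp_all
    then show False by simp
  qed
  have "inj (\<lambda>k. lam (Suc (k + K)))"
  proof (rule injI)
    fix k k' assume "lam (Suc (k + K)) = lam (Suc (k' + K))"
    then have "Suc (k + K) = Suc (k' + K)" by (rule inj_onD[OF lam_distinct]) simp_all
    then show "k = k'" by simp
  qed
  then show ?thesis
  proof (rule approx_by_span_powr_of_divergent_exponents[OF \<nu> _ lam_gt])
    show "approx_by_span (\<lambda>j t. t powr lam j) (\<lambda>t. t powr lam (Suc (k + K)))" for k
      using approx_by_span_basis[of "Suc (k + K)" "\<lambda>j t. t powr lam j"] by simp
    show "\<not> summable (\<lambda>k. 1 / lam (Suc (k + K)))"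
      using lam_div summable_iff_shift[of "\<lambda>i. 1 / lam (Suc i)" K] by simp
  qed
qed

theorem approx_by_span_muntz:
  fixes lam :: "nat \<Rightarrow> real"
  assumes lam_distinct: "inj_on lam {1..}" and lam_pos: "\<And>i. i \<ge> 1 \<Longrightarrow> lam i > 0"
    and lam_inf: "\<exists>\<delta>>0. \<forall>i\<ge>1. lam i \<ge> \<delta>" and lam_div: "\<not> summable (\<lambda>i. 1 / lam (Suc i))"
    and f: "continuous_on {0..1} f"
  shows "approx_by_span (\<lambda>j t. t powr lam j) f"
proof (rule approx_by_span_uniform_limit)
  have monomial: "approx_by_span (\<lambda>j t. t powr lam j) (\<lambda>t. t ^ i)" for i
  proof (cases "i = 0")
    case True
    then show ?thesis using approx_by_span_const[of "\<lambda>j t. t powr lam j" 1] by simp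
  next
    case False
    then have "approx_by_span (\<lambda>j t. t powr lam j) (\<lambda>t. t powr real i)"
      using False by (intro approx_by_span_muntz_powr assms) auto
    then show ?thesis
    proof (rule approx_by_span_cong)
      fix t :: real assume "t \<in> {0..1}"
      then show "t powr real i = t ^ i" using False by (cases "t = 0") (auto simp: powr_realpow)
    qed
  qed
  fix \<epsilon> :: real assume "\<epsilon> > 0"
  obtain g where g: "real_polynomial_function g" "\<And>t. t \<in> {0..1} \<Longrightarrow> \<bar>f t - g t\<bar> < \<epsilon>"
    using Stone_Weierstrass_real_polynomial_function[OF compact_Icc f \<open>\<epsilon> > 0\<close>] by blast
  obtain a n where "g = (\<lambda>t. \<Sum>i\<le>n. a i * t ^ i)"
    using real_polynomial_function_imp_sum[OF g(1)] by blast
  moreover have "approx_by_span (\<lambda>j t. t powr lam j) (\<lambda>t. \<Sum>i\<le>n. a i * t ^ i)"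
    by (intro approx_by_span_sum approx_by_span_scale monomial) simp
  moreover have "\<forall>t\<in>{0..1}. \<bar>f t - g t\<bar> \<le> \<epsilon>"
    using g(2) by (simp add: less_imp_le)
  ultimately show "\<exists>g. approx_by_span (\<lambda>j t. t powr lam j) g \<and> (\<forall>t\<in>{0..1}. \<bar>f t - g t\<bar> \<le> \<epsilon>)"
    by blast
qed

section \<open>The q-MKZ operators\<close>

lemma qint_eq_sum: "qint q k = (\<Sum>j<k. q ^ j)"
  by (simp add: qint_def sum_gp_strict)

lemma qint_0 [simp]: "qint q 0 = 0"
  by (simp add: qint_eq_sum)

lemma qint_Suc: "qint q (Suc k) = qint q k + q ^ k"
  by (simp add: qint_eq_sum)

lemma qint_add: "qint q (a + b) = qint q a + q ^ a * qint q b"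
  by (induction b) (simp_all add: qint_Suc algebra_simps power_add)

lemma qint_nonneg: "0 \<le> q \<Longrightarrow> 0 \<le> qint q k"
  by (simp add: qint_eq_sum sum_nonneg)

lemma qint_pos: "0 < q \<Longrightarrow> 0 < k \<Longrightarrow> 0 < qint q k"
  by (cases k) (auto simp: qint_Suc intro!: add_nonneg_pos qint_nonneg)

lemma qint_mono: "0 \<le> q \<Longrightarrow> a \<le> b \<Longrightarrow> qint q a \<le> qint q b"
  using qint_add[of q a "b - a"] by (simp add: qint_nonneg)

lemma q_mult_qint: "q * qint q k = qint q k + q ^ k - 1"
  by (induction k) (simp_all add: qint_Suc algebra_simps)

lemma qint_cross_diff:
  "qint q (Suc k) * qint q (k + n) - qint q k * qint q (Suc k + n) = q ^ k * qint q n"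
proof -
  have "qint q (Suc k) * qint q (k + n) - qint q k * qint q (Suc k + n)
      = q ^ k * qint q n * (qint q k + q ^ k - q * qint q k)"
    unfolding qint_add qint_Suc by (simp add: algebra_simps)
  then show ?thesis by (simp add: q_mult_qint)
qed

lemma qfact_0 [simp]: "qfact q 0 = 1"
  by (simp add: qfact_def)

lemma qfact_Suc: "qfact q (Suc n) = qfact q n * qint q (Suc n)"
  by (simp add: qfact_def)

lemma qfact_pos: "0 < q \<Longrightarrow> 0 < qfact q n"
  by (auto simp: qfact_def intro!: prod_pos qint_pos)

definition mkz_coeff :: "real \<Rightarrow> nat \<Rightarrow> nat \<Rightarrow> real" where
  "mkz_coeff q n k = qbinom q (n + k) k"

definition mkz_node :: "real \<Rightarrow> nat \<Rightarrow> nat \<Rightarrow> real" where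
  "mkz_node q n k = qint q k / qint q (k + n)"

definition mkz_weight :: "real \<Rightarrow> nat \<Rightarrow> real \<Rightarrow> nat \<Rightarrow> real" where
  "mkz_weight q n x k = mkz_coeff q n k * x ^ k"

definition mkz_prod :: "real \<Rightarrow> nat \<Rightarrow> real \<Rightarrow> real" where
  "mkz_prod q n x = (\<Prod>j=0..n. 1 - q ^ j * x)"

lemma MKZ_eq_suminf:
  "x \<noteq> 1 \<Longrightarrow> MKZ n q h x = mkz_prod q n x * (\<Sum>k. mkz_weight q n x k * h (mkz_node q n k))"
  by (simp add: MKZ_def mkz_prod_def mkz_weight_def mkz_coeff_def mkz_node_def)

lemma mkz_coeff_eq: "mkz_coeff q n k = qfact q (n + k) / (qfact q k * qfact q n)"
  by (simp add: mkz_coeff_def qbinom_def)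

lemma mkz_coeff_0_right: "0 < q \<Longrightarrow> mkz_coeff q n 0 = 1"
  using qfact_pos[of q n] by (simp add: mkz_coeff_eq)

lemma mkz_coeff_0_left: "0 < q \<Longrightarrow> mkz_coeff q 0 k = 1"
  using qfact_pos[of q k] by (simp add: mkz_coeff_eq)

lemma mkz_coeff_nonneg: "0 < q \<Longrightarrow> 0 \<le> mkz_coeff q n k"
  by (simp add: mkz_coeff_eq qfact_pos less_imp_le)

lemma mkz_coeff_Suc_Suc:
  assumes q: "0 < q"
  shows "mkz_coeff q (Suc n) (Suc k) = q ^ Suc n * mkz_coeff q (Suc n) k + mkz_coeff q n (Suc k)"
proof -
  define m where "m = n + k + 1"
  have fact_sum: "qfact q (Suc n + Suc k) = qfact q m * (qint q (Suc n) + q ^ Suc n * qint q (Suc k))"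
    unfolding m_def using qint_add[of q "Suc n" "Suc k"] qfact_Suc[of q "n + k + 1"] by simp
  have "Suc n + k = m" "n + Suc k = m" by (simp_all add: m_def)
  moreover have "qfact q k > 0" "qfact q n > 0" "qfact q m > 0" "qint q (Suc k) > 0" "qint q (Suc n) > 0"
    using q by (auto simp: qfact_pos qint_pos)
  ultimately show ?thesis
    unfolding mkz_coeff_eq fact_sum qfact_Suc by (simp add: field_simps)
qed

lemma mkz_coeff_Suc_left:
  assumes q: "0 < q"
  shows "mkz_coeff q (Suc n) k = (\<Sum>i\<le>k. mkz_coeff q n i * (q ^ Suc n) ^ (k - i))"
proof (induction k)
  case 0
  then show ?case using q by (simp add: mkz_coeff_0_right)
next
  case (Suc k)
  have "(\<Sum>i\<le>k. mkz_coeff q n i * (q ^ Suc n) ^ (Suc k - i))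
      = q ^ Suc n * (\<Sum>i\<le>k. mkz_coeff q n i * (q ^ Suc n) ^ (k - i))"
    unfolding sum_distrib_left by (rule sum.cong) (simp_all add: Suc_diff_le)
  then show ?case
    using Suc.IH mkz_coeff_Suc_Suc[OF q, of n k] by simp
qed

lemma mkz_coeff_mult_node_Suc:
  assumes q: "0 < q"
  shows "mkz_coeff q n (Suc k) * mkz_node q n (Suc k) = mkz_coeff q n k"
proof -
  have Suc_add: "n + Suc k = Suc (n + k)" "Suc k + n = Suc (n + k)" by simp_all
  have "qfact q k > 0" "qfact q n > 0" "qfact q (n + k) > 0" "qint q (Suc k) > 0"
    "qint q (Suc (n + k)) > 0"
    using q by (auto simp: qfact_pos qint_pos)
  then show ?thesis
    unfolding mkz_coeff_eq mkz_node_def Suc_add qfact_Suc by (simp add: field_simps)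
qed

lemma mkz_node_0 [simp]: "mkz_node q n 0 = 0"
  by (simp add: mkz_node_def)

lemma mkz_node_mem:
  assumes "0 < q" and "1 \<le> n"
  shows "mkz_node q n k \<in> {0..1}"
proof -
  have "0 < qint q (k + n)" using assms by (intro qint_pos) auto
  moreover have "qint q k \<le> qint q (k + n)" using assms by (intro qint_mono) auto
  ultimately show ?thesis
    using qint_nonneg[of q k] assms by (simp add: mkz_node_def divide_le_eq_1)
qed

lemma mkz_node_Suc_le:
  assumes q: "0 < q" "q \<le> 1" and n: "1 \<le> n"
  shows "mkz_node q n (Suc k) \<le> mkz_node q n k + 1 / qint q n"
proof -
  define A B Q where "A = qint q (Suc k + n)" and "B = qint q (k + n)" and "Q = qint q n"
  have Q: "Q > 0" using q n by (simp add: Q_def qint_pos)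
  have "Q \<le> A" "Q \<le> B" unfolding Q_def A_def B_def using q by (auto intro: qint_mono)
  have "q ^ k * Q \<le> Q" using Q q by (intro mult_left_le_one_le power_le_one) auto
  then have "q ^ k * Q \<le> A" using \<open>Q \<le> A\<close> by (rule order_trans)
  then have "q ^ k * Q * Q \<le> A * B"
    using Q \<open>Q \<le> A\<close> \<open>Q \<le> B\<close> by (intro mult_mono) auto
  then have "q ^ k * Q / (A * B) \<le> 1 / Q"
    using Q \<open>Q \<le> A\<close> \<open>Q \<le> B\<close> by (simp add: field_simps)
  moreover have "mkz_node q n (Suc k) - mkz_node q n k = q ^ k * Q / (A * B)"
    using qint_cross_diff[of q k n] Q \<open>Q \<le> A\<close> \<open>Q \<le> B\<close>
    by (simp add: mkz_node_def A_def B_def Q_def field_simps)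
  ultimately show ?thesis by (simp add: Q_def)
qed

lemma mkz_weight_nonneg: "0 < q \<Longrightarrow> 0 \<le> x \<Longrightarrow> 0 \<le> mkz_weight q n x k"
  by (simp add: mkz_weight_def mkz_coeff_nonneg)

lemma mkz_weight_Suc_mult_node:
  assumes "0 < q"
  shows "mkz_weight q n x (Suc k) * mkz_node q n (Suc k) = x * mkz_weight q n x k"
proof -
  have "mkz_weight q n x (Suc k) * mkz_node q n (Suc k)
      = x * x ^ k * (mkz_coeff q n (Suc k) * mkz_node q n (Suc k))"
    by (simp add: mkz_weight_def ac_simps)
  also have "\<dots> = x * mkz_weight q n x k"
    unfolding mkz_coeff_mult_node_Suc[OF assms] by (simp add: mkz_weight_def ac_simps)
  finally show ?thesis .
qed

lemma mkz_prod_pos: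
  assumes "0 < q" "q \<le> 1" "0 \<le> x" "x < 1"
  shows "0 < mkz_prod q n x"
  unfolding mkz_prod_def
proof (rule prod_pos)
  fix j
  have "q ^ j * x \<le> x" using assms by (intro mult_left_le_one_le power_le_one) auto
  then show "0 < 1 - q ^ j * x" using assms by simp
qed

text \<open>The step \<open>n \<mapsto> n + 1\<close> is a Cauchy product with the geometric series in \<open>q^(n+1) x\<close>.\<close>
lemma mkz_weight_sums:
  assumes q: "0 < q" "q \<le> 1" and x: "0 \<le> x" "x < 1"
  shows "mkz_weight q n x sums (1 / mkz_prod q n x)"
  unfolding mkz_weight_def mkz_prod_def
proof (induction n)
  case 0
  then show ?case using geometric_sums[of x] x by (simp add: mkz_coeff_0_left[OF q(1)])
next
  case (Suc n)
  define r where "r = q ^ Suc n * x"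
  have r: "0 \<le> r" "r < 1"
    using mult_left_le_one_le[OF x(1) _ power_le_one[of q "Suc n"]] q x by (auto simp: r_def)
  have conv: "mkz_coeff q (Suc n) k * x ^ k = (\<Sum>i\<le>k. mkz_coeff q n i * x ^ i * r ^ (k - i))" for k
  proof -
    have "x ^ k = x ^ i * x ^ (k - i)" if "i \<le> k" for i
      using that by (simp add: power_add[symmetric])
    then show ?thesis
      unfolding mkz_coeff_Suc_left[OF q(1)] sum_distrib_right r_def power_mult_distrib
      by (intro sum.cong) (simp_all add: mult_ac)
  qed
  have "summable (\<lambda>k. norm (mkz_coeff q n k * x ^ k))"
    using sums_summable[OF Suc.IH] mkz_coeff_nonneg[OF q(1)] x by simp
  moreover have "summable (\<lambda>k. norm (r ^ k))"
    using r by (simp add: norm_power summable_geometric)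
  ultimately have "(\<lambda>k. \<Sum>i\<le>k. mkz_coeff q n i * x ^ i * r ^ (k - i))
      sums ((\<Sum>k. mkz_coeff q n k * x ^ k) * (\<Sum>k. r ^ k))"
    by (rule Cauchy_product_sums)
  moreover have "(\<Sum>k. mkz_coeff q n k * x ^ k) * (\<Sum>k. r ^ k) = 1 / (\<Prod>j=0..Suc n. 1 - q ^ j * x)"
    using sums_unique[OF Suc.IH, symmetric] suminf_geometric[of r] r
    by (simp add: r_def prod.atLeast0_atMost_Suc)
  ultimately show ?case unfolding conv by simp
qed

context
  fixes q :: real and n :: nat
  assumes q_pos: "0 < q" and q_le_1: "q \<le> 1" and n_pos: "1 \<le> n"
begin

lemma summable_MKZ_series:
  assumes x: "0 \<le> x" "x < 1" and h: "continuous_on {0..1} h"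
  shows "summable (\<lambda>k. mkz_weight q n x k * h (mkz_node q n k))"
proof -
  obtain B where B: "\<forall>y\<in>h ` {0..1}. norm y \<le> B"
    using compact_imp_bounded[OF compact_continuous_image[OF h compact_Icc]] bounded_iff by blast
  have "summable (\<lambda>k. B * mkz_weight q n x k)"
    using sums_summable[OF mkz_weight_sums[OF q_pos q_le_1 x]] by (rule summable_mult)
  then show ?thesis
  proof (rule summable_comparison_test')
    fix k
    have w: "0 \<le> mkz_weight q n x k" using mkz_weight_nonneg[OF q_pos x(1)] .
    then have "norm (mkz_weight q n x k * h (mkz_node q n k))
        = mkz_weight q n x k * \<bar>h (mkz_node q n k)\<bar>"
      by (simp add: abs_mult)
    also have "\<dots> \<le> mkz_weight q n x k * B"
      using B mkz_node_mem[OF q_pos n_pos] w by (intro mult_left_mono) auto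
    finally show "norm (mkz_weight q n x k * h (mkz_node q n k)) \<le> B * mkz_weight q n x k"
      by (simp add: mult.commute)
  qed
qed

lemma mkz_first_moment_sums:
  assumes x: "0 \<le> x" "x < 1"
  shows "(\<lambda>k. mkz_weight q n x k * mkz_node q n k) sums (x / mkz_prod q n x)"
proof -
  have "(\<lambda>k. mkz_weight q n x (Suc k) * mkz_node q n (Suc k)) sums (x * (1 / mkz_prod q n x))"
    unfolding mkz_weight_Suc_mult_node[OF q_pos]
    by (rule sums_mult[OF mkz_weight_sums[OF q_pos q_le_1 x]])
  then show ?thesis
    using sums_Suc_iff[of "\<lambda>k. mkz_weight q n x k * mkz_node q n k"] by simp
qed

text \<open>With \<open>w = mkz_weight q n x\<close> and \<open>t = mkz_node q n\<close>, shifting the index gives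
  \<open>w (k+1) t (k+1)\<^sup>2 = x w k t (k+1) \<le> x w k (t k + 1/[n])\<close>.\<close>
lemma mkz_second_moment_le:
  assumes x: "0 \<le> x" "x < 1"
  shows "(\<Sum>k. mkz_weight q n x k * (mkz_node q n k)\<^sup>2) \<le> (x\<^sup>2 + x / qint q n) / mkz_prod q n x"
proof -
  let ?w = "mkz_weight q n x" and ?t = "mkz_node q n"
  have summable: "summable (\<lambda>k. ?w k * (?t k)\<^sup>2)"
    using summable_MKZ_series[OF x, of "\<lambda>s. s\<^sup>2"] by (simp add: continuous_intros)
  then have "(\<Sum>k. ?w k * (?t k)\<^sup>2) = (\<Sum>k. ?w (Suc k) * (?t (Suc k))\<^sup>2)"
    using suminf_split_head[OF summable] by simp
  also have "\<dots> \<le> (\<Sum>k. x * (?w k * ?t k) + x / qint q n * ?w k)"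
  proof (rule suminf_le)
    fix k
    have "?w (Suc k) * (?t (Suc k))\<^sup>2 = x * ?w k * ?t (Suc k)"
      by (simp add: power2_eq_square mult.assoc[symmetric] mkz_weight_Suc_mult_node[OF q_pos])
    also have "\<dots> \<le> x * ?w k * (?t k + 1 / qint q n)"
      using mkz_node_Suc_le[OF q_pos q_le_1 n_pos] x mkz_weight_nonneg[OF q_pos x(1)]
      by (intro mult_left_mono) auto
    finally show "?w (Suc k) * (?t (Suc k))\<^sup>2 \<le> x * (?w k * ?t k) + x / qint q n * ?w k"
      by (simp add: algebra_simps)
  next
    show "summable (\<lambda>k. ?w (Suc k) * (?t (Suc k))\<^sup>2)"
      using summable summable_Suc_iff[of "\<lambda>k. ?w k * (?t k)\<^sup>2"] by simp
    show "summable (\<lambda>k. x * (?w k * ?t k) + x / qint q n * ?w k)"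
      by (intro summable_add summable_mult sums_summable[OF mkz_first_moment_sums[OF x]]
          sums_summable[OF mkz_weight_sums[OF q_pos q_le_1 x]])
  qed
  also have "\<dots> = x * (x / mkz_prod q n x) + x / qint q n * (1 / mkz_prod q n x)"
    by (intro sums_unique[symmetric] sums_add sums_mult mkz_first_moment_sums[OF x]
        mkz_weight_sums[OF q_pos q_le_1 x])
  also have "\<dots> = (x\<^sup>2 + x / qint q n) / mkz_prod q n x"
    by (simp add: power2_eq_square add_divide_distrib)
  finally show ?thesis .
qed

lemma mkz_central_moment_le:
  assumes x: "0 \<le> x" "x < 1"
  shows "mkz_prod q n x * (\<Sum>k. mkz_weight q n x k * (mkz_node q n k - x)\<^sup>2) \<le> x / qint q n"
proof -
  let ?w = "mkz_weight q n x" and ?t = "mkz_node q n" and ?P = "mkz_prod q n x"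
  have P: "?P > 0" by (rule mkz_prod_pos[OF q_pos q_le_1 x])
  have "summable (\<lambda>k. ?w k * (?t k)\<^sup>2)"
    using summable_MKZ_series[OF x, of "\<lambda>s. s\<^sup>2"] by (simp add: continuous_intros)
  then have "(\<lambda>k. ?w k * (?t k)\<^sup>2 - 2 * x * (?w k * ?t k) + x\<^sup>2 * ?w k)
      sums ((\<Sum>k. ?w k * (?t k)\<^sup>2) - 2 * x * (x / ?P) + x\<^sup>2 * (1 / ?P))"
    by (intro sums_add sums_diff sums_mult mkz_first_moment_sums[OF x]
        mkz_weight_sums[OF q_pos q_le_1 x] summable_sums)
  then have "(\<Sum>k. ?w k * (?t k - x)\<^sup>2) = (\<Sum>k. ?w k * (?t k)\<^sup>2) - 2 * x * (x / ?P) + x\<^sup>2 * (1 / ?P)"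
    by (simp add: sums_iff power2_eq_square algebra_simps)
  then have "?P * (\<Sum>k. ?w k * (?t k - x)\<^sup>2) = ?P * (\<Sum>k. ?w k * (?t k)\<^sup>2) - x\<^sup>2"
    using P by (simp add: field_simps power2_eq_square)
  also have "\<dots> \<le> ?P * ((x\<^sup>2 + x / qint q n) / ?P) - x\<^sup>2"
    using mkz_second_moment_le[OF x] P by (intro diff_right_mono mult_left_mono) auto
  also have "\<dots> = x / qint q n"
    using P by simp
  finally show ?thesis .
qed

lemma MKZ_diff_eq_suminf:
  assumes x: "0 \<le> x" "x < 1" and h: "continuous_on {0..1} h"
  shows "MKZ n q h x - h x = mkz_prod q n x * (\<Sum>k. mkz_weight q n x k * (h (mkz_node q n k) - h x))"
proof -
  let ?w = "mkz_weight q n x" and ?t = "mkz_node q n" and ?P = "mkz_prod q n x"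
  have P: "?P \<noteq> 0" using mkz_prod_pos[OF q_pos q_le_1 x, of n] by simp
  have "(\<lambda>k. ?w k * (h (?t k) - h x)) sums ((\<Sum>k. ?w k * h (?t k)) - 1 / ?P * h x)"
    using sums_diff[OF summable_sums[OF summable_MKZ_series[OF x h]]
        sums_mult2[OF mkz_weight_sums[OF q_pos q_le_1 x, of n], of "h x"]]
    by (simp add: right_diff_distrib)
  then have "?P * (\<Sum>k. ?w k * (h (?t k) - h x)) = ?P * (\<Sum>k. ?w k * h (?t k)) - h x"
    using P by (simp add: sums_iff right_diff_distrib)
  then show ?thesis using x by (simp add: MKZ_eq_suminf)
qed

lemma MKZ_approx_bound:
  assumes x_mem: "x \<in> {0..1}" and h: "continuous_on {0..1} h" and C: "0 \<le> C"
    and modulus: "\<And>s y. s \<in> {0..1} \<Longrightarrow> y \<in> {0..1} \<Longrightarrow> \<bar>h s - h y\<bar> \<le> \<epsilon> + C * (s - y)\<^sup>2"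
  shows "\<bar>MKZ n q h x - h x\<bar> \<le> \<epsilon> + C / qint q n"
proof (cases "x = 1")
  case True
  have "0 \<le> \<epsilon>" using modulus[of 0 0] by simp
  then show ?thesis using True C qint_nonneg[of q n] q_pos by (simp add: MKZ_def)
next
  case False
  then have x: "0 \<le> x" "x < 1" using x_mem by auto
  let ?w = "mkz_weight q n x" and ?t = "mkz_node q n" and ?P = "mkz_prod q n x"
  have P: "?P > 0" by (rule mkz_prod_pos[OF q_pos q_le_1 x])
  have w_sums: "?w sums (1 / ?P)" by (rule mkz_weight_sums[OF q_pos q_le_1 x])
  have sq: "summable (\<lambda>k. ?w k * (?t k - x)\<^sup>2)"
    using summable_MKZ_series[OF x, of "\<lambda>s. (s - x)\<^sup>2"] by (simp add: continuous_intros)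
  have "norm (\<Sum>k. ?w k * (h (?t k) - h x)) \<le> (\<Sum>k. ?w k * (\<epsilon> + C * (?t k - x)\<^sup>2))"
  proof (rule norm_suminf_le)
    show "norm (?w k * (h (?t k) - h x)) \<le> ?w k * (\<epsilon> + C * (?t k - x)\<^sup>2)" for k
      using modulus[OF mkz_node_mem[OF q_pos n_pos] x_mem] mkz_weight_nonneg[OF q_pos x(1), of n k]
      by (simp add: abs_mult mult_left_mono)
    show "summable (\<lambda>k. ?w k * (\<epsilon> + C * (?t k - x)\<^sup>2))"
      using summable_add[OF summable_mult2[OF sums_summable[OF w_sums], of \<epsilon>] summable_mult[OF sq, of C]]
      by (simp add: algebra_simps)
  qed
  then have "\<bar>MKZ n q h x - h x\<bar> \<le> ?P * (\<Sum>k. ?w k * (\<epsilon> + C * (?t k - x)\<^sup>2))"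
    using MKZ_diff_eq_suminf[OF x h] P by (simp add: abs_mult)
  also have "\<dots> = \<epsilon> + C * (?P * (\<Sum>k. ?w k * (?t k - x)\<^sup>2))"
  proof -
    have "(\<lambda>k. ?w k * (\<epsilon> + C * (?t k - x)\<^sup>2)) sums (\<epsilon> * (1 / ?P) + C * (\<Sum>k. ?w k * (?t k - x)\<^sup>2))"
      using sums_add[OF sums_mult2[OF w_sums, of \<epsilon>] sums_mult[OF summable_sums[OF sq], of C]]
      by (simp add: algebra_simps)
    then show ?thesis using P by (simp add: sums_iff algebra_simps)
  qed
  also have "\<dots> \<le> \<epsilon> + C * (x / qint q n)"
    using mkz_central_moment_le[OF x] C by (intro add_left_mono mult_left_mono)
  also have "\<dots> \<le> \<epsilon> + C / qint q n"
    using C x qint_nonneg[of q n] q_pos by (simp add: divide_right_mono mult_left_le)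
  finally show ?thesis .
qed

end

lemma MKZ_at_0:
  assumes "0 < q"
  shows "MKZ n q h 0 = h 0"
proof -
  have "(\<lambda>k. mkz_weight q n 0 k * h (mkz_node q n k)) = (\<lambda>k. if k = 0 then h 0 else 0)"
    using mkz_coeff_0_right[OF assms] by (auto simp: fun_eq_iff mkz_weight_def)
  then show ?thesis
    using sums_single[of 0 "\<lambda>_. h 0"] by (simp add: MKZ_eq_suminf sums_iff mkz_prod_def)
qed

lemma MKZ_at_1: "MKZ n q h 1 = h 1"
  by (simp add: MKZ_def)

lemma continuous_on_quadratic_modulus:
  fixes h :: "real \<Rightarrow> real"
  assumes S: "compact S" and h: "continuous_on S h" and \<epsilon>: "\<epsilon> > 0"
  obtains C where "C \<ge> 0" "\<And>s y. s \<in> S \<Longrightarrow> y \<in> S \<Longrightarrow> \<bar>h s - h y\<bar> \<le> \<epsilon> + C * (s - y)\<^sup>2"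
proof -
  obtain B where B: "B > 0" "\<And>s. s \<in> S \<Longrightarrow> \<bar>h s\<bar> \<le> B"
    using compact_imp_bounded[OF compact_continuous_image[OF h S]] unfolding bounded_pos by auto
  obtain d where d: "d > 0"
    and close: "\<And>s y. s \<in> S \<Longrightarrow> y \<in> S \<Longrightarrow> dist y s < d \<Longrightarrow> dist (h y) (h s) < \<epsilon>"
    using compact_uniformly_continuous[OF h S] \<epsilon> unfolding uniformly_continuous_on_def by metis
  have "\<bar>h s - h y\<bar> \<le> \<epsilon> + 2 * B / d\<^sup>2 * (s - y)\<^sup>2" if s: "s \<in> S" and y: "y \<in> S" for s y
  proof (cases "\<bar>s - y\<bar> < d")
    case True
    then have "\<bar>h s - h y\<bar> < \<epsilon>" using close[OF y s] by (simp add: dist_real_def)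
    moreover have "0 \<le> 2 * B / d\<^sup>2 * (s - y)\<^sup>2" using B by simp
    ultimately show ?thesis by linarith
  next
    case False
    then have "d\<^sup>2 \<le> (s - y)\<^sup>2" using d power_mono[of d "\<bar>s - y\<bar>" 2] by simp
    then have "2 * B / d\<^sup>2 * d\<^sup>2 \<le> 2 * B / d\<^sup>2 * (s - y)\<^sup>2" using B by (intro mult_left_mono) auto
    then have "2 * B \<le> 2 * B / d\<^sup>2 * (s - y)\<^sup>2" using d by simp
    moreover have "\<bar>h s - h y\<bar> \<le> 2 * B"
      using abs_triangle_ineq4[of "h s" "h y"] B(2)[OF s] B(2)[OF y] by linarith
    ultimately show ?thesis using \<epsilon> by linarith
  qed
  then show thesis using B d by (intro that[of "2 * B / d\<^sup>2"]) auto
qed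

lemma filterlim_qint_at_top:
  fixes q :: "nat \<Rightarrow> real"
  assumes q_range: "\<And>n. 0 < q n \<and> q n \<le> 1" and q_lim: "q \<longlonglongrightarrow> 1"
  shows "filterlim (\<lambda>n. qint (q n) n) at_top sequentially"
  unfolding filterlim_at_top
proof
  fix B :: real
  define K where "K = nat \<lceil>2 * B\<rceil>"
  have "(\<lambda>n. q n ^ K) \<longlonglongrightarrow> 1" using tendsto_power[OF q_lim, of K] by simp
  then have "eventually (\<lambda>n. 1/2 < q n ^ K) sequentially" by (rule order_tendstoD) simp
  moreover have "eventually (\<lambda>n. K \<le> n) sequentially" by (rule eventually_ge_at_top)
  ultimately show "eventually (\<lambda>n. B \<le> qint (q n) n) sequentially"
  proof eventually_elim
    case (elim n)
    have "real K * (1/2) \<le> real K * q n ^ K" using elim by (intro mult_left_mono) auto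
    also have "\<dots> = (\<Sum>j<K. q n ^ K)" by simp
    also have "\<dots> \<le> (\<Sum>j<K. q n ^ j)" by (intro sum_mono power_decreasing) (use q_range[of n] in auto)
    also have "\<dots> \<le> (\<Sum>j<n. q n ^ j)" by (intro sum_mono2) (use elim q_range[of n] in auto)
    finally have "real K / 2 \<le> qint (q n) n" by (simp add: qint_eq_sum)
    moreover have "2 * B \<le> real K" unfolding K_def by linarith
    ultimately show ?case by linarith
  qed
qed

lemma MKZ_uniform_limit:
  fixes q :: "nat \<Rightarrow> real"
  assumes q_range: "\<And>n. 0 < q n \<and> q n \<le> 1" and q_lim: "q \<longlonglongrightarrow> 1"
    and h: "continuous_on {0..1} h"
  shows "uniform_limit {0..1} (\<lambda>n. MKZ n (q n) h) h sequentially"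
proof (rule uniform_limitI)
  fix \<eta> :: real assume "\<eta> > 0"
  then obtain C where C: "C \<ge> 0"
    "\<And>s y. s \<in> {0..1} \<Longrightarrow> y \<in> {0..1} \<Longrightarrow> \<bar>h s - h y\<bar> \<le> \<eta> / 4 + C * (s - y)\<^sup>2"
    using continuous_on_quadratic_modulus[OF compact_Icc h, of "\<eta> / 4"] by auto
  have "eventually (\<lambda>n. 4 * C / \<eta> < qint (q n) n) sequentially"
    using filterlim_qint_at_top[OF q_range q_lim] by (simp add: filterlim_at_top_dense)
  moreover have "eventually (\<lambda>n. 1 \<le> n) sequentially" by (rule eventually_ge_at_top)
  ultimately show "eventually (\<lambda>n. \<forall>x\<in>{0..1}. dist (MKZ n (q n) h x) (h x) < \<eta>) sequentially"
  proof eventually_elim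
    case (elim n)
    have "0 \<le> 4 * C / \<eta>" using C(1) \<open>\<eta> > 0\<close> by simp
    then have "qint (q n) n > 0" using elim(1) by linarith
    then have small: "C / qint (q n) n < \<eta> / 4"
      using elim(1) \<open>\<eta> > 0\<close> by (simp add: field_simps)
    show ?case
    proof
      fix x :: real assume x: "x \<in> {0..1}"
      have "\<bar>MKZ n (q n) h x - h x\<bar> \<le> \<eta> / 4 + C / qint (q n) n"
        using MKZ_approx_bound[OF _ _ elim(2) x h C] q_range[of n] by blast
      then show "dist (MKZ n (q n) h x) (h x) < \<eta>"
        using small \<open>\<eta> > 0\<close> unfolding dist_real_def by linarith
    qed
  qed
qed

section \<open>Fractal perturbation\<close>

definition fractal_solution ::
  "nat \<Rightarrow> (nat \<Rightarrow> real) \<Rightarrow> (nat \<Rightarrow> real \<Rightarrow> real) \<Rightarrow> (real \<Rightarrow> real) \<Rightarrow> (real \<Rightarrow> real) \<Rightarrow> (real \<Rightarrow> real) \<Rightarrow> bool"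
  where
  "fractal_solution N xs alpha h M G \<longleftrightarrow>
     bounded (G ` {0..1}) \<and> (\<forall>t. t \<notin> {0..1} \<longrightarrow> G t = 0) \<and>
     (\<forall>i\<in>{1..N-1}. \<forall>t\<in>{0..1}. G (affu xs i t) = h (affu xs i t) + alpha i t * (G t - M t))"

lemma fractal_eq_The: "fractal N xs alpha n q h = (THE G. fractal_solution N xs alpha h (MKZ n q h) G)"
  by (simp add: fractal_def fractal_solution_def)

lemma bounded_contracted_eq_0:
  fixes D :: "'a \<Rightarrow> real"
  assumes c: "0 \<le> c" "c < 1" and \<phi>: "\<And>s. s \<in> S \<Longrightarrow> \<phi> s \<in> S"
    and bound: "\<And>s. s \<in> S \<Longrightarrow> \<bar>D s\<bar> \<le> B"
    and contract: "\<And>s. s \<in> S \<Longrightarrow> \<bar>D s\<bar> \<le> c * \<bar>D (\<phi> s)\<bar>"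
    and s: "s \<in> S"
  shows "D s = 0"
proof -
  have iterate: "\<bar>D s\<bar> \<le> c ^ k * B" if "s \<in> S" for k s
    using that
  proof (induction k arbitrary: s)
    case 0
    then show ?case using bound by simp
  next
    case (Suc k)
    have "\<bar>D s\<bar> \<le> c * \<bar>D (\<phi> s)\<bar>" using contract[OF Suc.prems] .
    also have "\<dots> \<le> c * (c ^ k * B)" using Suc.IH[OF \<phi>[OF Suc.prems]] c by (intro mult_left_mono) auto
    finally show ?case by simp
  qed
  have "(\<lambda>k. c ^ k * B) \<longlonglongrightarrow> 0 * B"
    using c by (intro tendsto_mult LIMSEQ_power_zero tendsto_const) simp
  then have "\<bar>D s\<bar> \<le> 0"
    using iterate[OF s] by (intro LIMSEQ_le_const[of _ 0]) auto
  then show ?thesis by simp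
qed

text \<open>The fixed point is the series \<open>E s = \<Sum>k. (\<Prod>j<k. \<beta> (\<phi>^j s)) * \<gamma> (\<phi>^k s)\<close>,
  whose \<open>k\<close>-th term is bounded by \<open>c^k K\<close>.\<close>
lemma affine_contraction_fixpoint:
  fixes \<beta> \<gamma> :: "'a \<Rightarrow> real"
  assumes c: "0 \<le> c" "c < 1" and \<phi>: "\<And>s. s \<in> S \<Longrightarrow> \<phi> s \<in> S"
    and \<beta>: "\<And>s. s \<in> S \<Longrightarrow> \<bar>\<beta> s\<bar> \<le> c" and \<gamma>: "\<And>s. s \<in> S \<Longrightarrow> \<bar>\<gamma> s\<bar> \<le> K"
  obtains E where "\<And>s. s \<in> S \<Longrightarrow> E s = \<beta> s * E (\<phi> s) + \<gamma> s"
    and "\<And>s. s \<in> S \<Longrightarrow> \<bar>E s\<bar> \<le> K / (1 - c)"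
proof -
  define P where "P k s = (\<Prod>j<k. \<beta> ((\<phi> ^^ j) s))" for k s
  define E where "E s = (\<Sum>k. P k s * \<gamma> ((\<phi> ^^ k) s))" for s
  have orbit: "(\<phi> ^^ k) s \<in> S" if "s \<in> S" for k s
    using that by (induction k) (auto intro: \<phi>)
  have term_bound: "norm (P k s * \<gamma> ((\<phi> ^^ k) s)) \<le> c ^ k * K" if s: "s \<in> S" for k s
  proof -
    have "\<bar>P k s\<bar> \<le> c ^ k"
      unfolding P_def abs_prod using prod_mono[of "{..<k}" "\<lambda>j. \<bar>\<beta> ((\<phi> ^^ j) s)\<bar>" "\<lambda>_. c"]
      by (simp add: \<beta> orbit[OF s])
    then show ?thesis
      using \<gamma>[OF orbit[OF s]] by (simp add: abs_mult mult_mono' c(1))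
  qed
  have geometric: "(\<lambda>k. c ^ k * K) sums (K / (1 - c))"
    using sums_mult2[OF geometric_sums[of c], of K] c by simp
  have summable: "summable (\<lambda>k. P k s * \<gamma> ((\<phi> ^^ k) s))" if "s \<in> S" for s
    using sums_summable[OF geometric] term_bound[OF that] by (rule summable_comparison_test')
  show thesis
  proof
    fix s assume s: "s \<in> S"
    have P_Suc: "P (Suc k) s = \<beta> s * P k (\<phi> s)" for k
      unfolding P_def prod.lessThan_Suc_shift by (simp add: funpow_Suc_right del: funpow.simps)
    have "E s = P 0 s * \<gamma> s + (\<Sum>k. P (Suc k) s * \<gamma> ((\<phi> ^^ Suc k) s))"
      using suminf_split_head[OF summable[OF s]] by (simp add: E_def)
    also have "(\<Sum>k. P (Suc k) s * \<gamma> ((\<phi> ^^ Suc k) s)) = \<beta> s * E (\<phi> s)"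
      unfolding P_Suc E_def using suminf_mult[OF summable[OF \<phi>[OF s]], of "\<beta> s"]
      by (simp add: funpow_Suc_right mult.assoc del: funpow.simps)
    finally show "E s = \<beta> s * E (\<phi> s) + \<gamma> s" by (simp add: P_def)
    show "\<bar>E s\<bar> \<le> K / (1 - c)"
      using norm_suminf_le[OF term_bound[OF s] sums_summable[OF geometric]] sums_unique[OF geometric]
      by (simp add: E_def)
  qed
qed

lemma uniform_contraction_bound:
  fixes a :: "'i \<Rightarrow> 'x \<Rightarrow> real"
  assumes "finite I" and bound: "\<And>i. i \<in> I \<Longrightarrow> \<exists>c<1. \<forall>t\<in>T. \<bar>a i t\<bar> \<le> c"
  obtains c where "0 \<le> c" "c < 1" "\<And>i t. i \<in> I \<Longrightarrow> t \<in> T \<Longrightarrow> \<bar>a i t\<bar> \<le> c"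
proof -
  obtain ci where ci: "\<And>i. i \<in> I \<Longrightarrow> ci i < 1 \<and> (\<forall>t\<in>T. \<bar>a i t\<bar> \<le> ci i)"
    using bound by metis
  define c where "c = Max (insert 0 (ci ` I))"
  have "ci i \<le> c" if "i \<in> I" for i using \<open>finite I\<close> that by (simp add: c_def)
  then have "\<bar>a i t\<bar> \<le> c" if "i \<in> I" "t \<in> T" for i t
    using ci that by (meson order_trans)
  moreover have "0 \<le> c" "c < 1" using \<open>finite I\<close> ci by (simp_all add: c_def)
  ultimately show thesis using that by blast
qed

locale interval_partition =
  fixes N :: nat and xs :: "nat \<Rightarrow> real"
  assumes N: "N \<ge> 2" and xs_first: "xs 1 = 0" and xs_last: "xs N = 1"
    and xs_less: "\<And>i. 1 \<le> i \<Longrightarrow> i < N \<Longrightarrow> xs i < xs (Suc i)"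
begin

lemma xs_strict_mono: "1 \<le> i \<Longrightarrow> i < j \<Longrightarrow> j \<le> N \<Longrightarrow> xs i < xs j"
proof (induction j)
  case (Suc j)
  then show ?case
    using xs_less[of j] by (cases "i = j") (auto intro: less_trans)
qed simp

lemma xs_mono: "1 \<le> i \<Longrightarrow> i \<le> j \<Longrightarrow> j \<le> N \<Longrightarrow> xs i \<le> xs j"
  using xs_strict_mono[of i j] by (cases "i = j") auto

lemma xs_less_piece: "i \<in> {1..N-1} \<Longrightarrow> xs i < xs (Suc i)"
  using N by (intro xs_less) auto

lemma affu_bounds:
  assumes i: "i \<in> {1..N-1}" and t: "t \<in> {0..1}"
  shows "xs i \<le> affu xs i t" "affu xs i t \<le> xs (Suc i)" "affu xs i t \<in> {0..1}"
proof -
  have gap: "xs (Suc i) - xs i > 0" using xs_less_piece[OF i] by simp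
  show lower: "xs i \<le> affu xs i t" using gap t by (simp add: affu_def)
  have "(xs (Suc i) - xs i) * t \<le> (xs (Suc i) - xs i) * 1" using gap t by (intro mult_left_mono) auto
  then show upper: "affu xs i t \<le> xs (Suc i)" by (simp add: affu_def)
  have "xs 1 \<le> xs i" "xs (Suc i) \<le> xs N" using i N by (auto intro: xs_mono)
  then show "affu xs i t \<in> {0..1}" using lower upper xs_first xs_last by auto
qed

definition piece :: "real \<Rightarrow> nat" where
  "piece s = (LEAST i. 1 \<le> i \<and> s \<le> xs (Suc i))"

definition local_coord :: "real \<Rightarrow> real" where
  "local_coord s = (s - xs (piece s)) / (xs (Suc (piece s)) - xs (piece s))"

lemma piece_bounds:
  assumes s: "s \<in> {0..1}"
  shows "piece s \<in> {1..N-1}" "xs (piece s) \<le> s" "s \<le> xs (Suc (piece s))"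
proof -
  let ?P = "\<lambda>i. 1 \<le> i \<and> s \<le> xs (Suc i)"
  have P_last: "?P (N - 1)" using N s xs_last by (simp add: Suc_diff_Suc numeral_2_eq_2)
  have P_piece: "?P (piece s)" unfolding piece_def by (rule LeastI[of ?P, OF P_last])
  have "piece s \<le> N - 1" unfolding piece_def by (rule Least_le[of ?P, OF P_last])
  then show "piece s \<in> {1..N-1}" "s \<le> xs (Suc (piece s))" using P_piece by auto
  show "xs (piece s) \<le> s"
  proof (cases "piece s = 1")
    case True
    then show ?thesis using xs_first s by simp
  next
    case False
    then have "\<not> ?P (piece s - 1)"
      using P_piece not_less_Least[of "piece s - 1" ?P] unfolding piece_def by fastforce
    moreover have "1 \<le> piece s - 1" "Suc (piece s - 1) = piece s" using P_piece False by auto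
    ultimately show ?thesis by simp
  qed
qed

lemma local_coord_mem: "s \<in> {0..1} \<Longrightarrow> local_coord s \<in> {0..1}"
  using piece_bounds[of s] xs_less_piece[of "piece s"]
  by (auto simp: local_coord_def divide_le_eq_1)

lemma affu_local_coord: "s \<in> {0..1} \<Longrightarrow> affu xs (piece s) (local_coord s) = s"
  using piece_bounds[of s] xs_less_piece[of "piece s"] by (auto simp: affu_def local_coord_def)

text \<open>The breakpoint \<open>xs i\<close> is both \<open>affu xs i 0\<close> and \<open>affu xs (i - 1) 1\<close>; \<open>piece\<close> picks
  the left piece.\<close>
lemma piece_affu:
  assumes i: "i \<in> {1..N-1}" and t: "t \<in> {0..1}"
  shows "(piece (affu xs i t) = i \<and> local_coord (affu xs i t) = t) \<or>
    (t = 0 \<and> 2 \<le> i \<and> piece (affu xs i t) = i - 1 \<and> local_coord (affu xs i t) = 1)"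
proof -
  define s where "s = affu xs i t"
  define j where "j = piece s"
  have s: "xs i \<le> s" "s \<le> xs (Suc i)" "s \<in> {0..1}" using affu_bounds[OF i t] by (simp_all add: s_def)
  have j: "j \<in> {1..N-1}" "xs j \<le> s" "s \<le> xs (Suc j)" using piece_bounds[OF s(3)] by (simp_all add: j_def)
  have "j \<le> i" unfolding j_def piece_def by (rule Least_le) (use i s in auto)
  have gap: "xs (Suc i) - xs i > 0" using xs_less_piece[OF i] by simp
  show ?thesis
  proof (cases "j = i")
    case True
    then show ?thesis using gap by (simp add: j_def s_def local_coord_def affu_def)
  next
    case False
    then have "Suc j \<le> i" using \<open>j \<le> i\<close> by simp
    then have "xs (Suc j) \<le> xs i" using j i by (intro xs_mono) auto
    then have "s = xs i" "xs (Suc j) = xs i" using s j by auto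
    moreover have "Suc j = i"
    proof (rule ccontr)
      assume "Suc j \<noteq> i"
      moreover have "i < N" using i N by auto
      ultimately have "xs (Suc j) < xs i" using \<open>Suc j \<le> i\<close> by (intro xs_strict_mono) auto
      then show False using \<open>xs (Suc j) = xs i\<close> by simp
    qed
    moreover have "xs (Suc j) - xs j > 0" using xs_less_piece j by simp
    ultimately show ?thesis
      using gap j(1) by (auto simp: j_def s_def local_coord_def affu_def)
  qed
qed

lemma local_coord_0: "local_coord 0 = 0"
  using piece_affu[of 1 0] N xs_first by (simp add: affu_def)

lemma local_coord_1: "local_coord 1 = 1"
proof -
  have "affu xs (N - 1) 1 = 1" using N xs_last by (simp add: affu_def Suc_diff_1)
  then show ?thesis using piece_affu[of "N - 1" 1] N by auto
qed

lemma fractal_solution_at: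
  assumes G: "fractal_solution N xs alpha h M G" and s: "s \<in> {0..1}"
  shows "G s = h s + alpha (piece s) (local_coord s) * (G (local_coord s) - M (local_coord s))"
proof -
  have "piece s \<in> {1..N-1}" "local_coord s \<in> {0..1}"
    using piece_bounds[OF s] local_coord_mem[OF s] by auto
  then show ?thesis
    using G affu_local_coord[OF s] unfolding fractal_solution_def by metis
qed

context
  fixes alpha :: "nat \<Rightarrow> real \<Rightarrow> real" and c :: real
  assumes c: "0 \<le> c" "c < 1"
    and alpha_le: "\<And>i t. i \<in> {1..N-1} \<Longrightarrow> t \<in> {0..1} \<Longrightarrow> \<bar>alpha i t\<bar> \<le> c"
begin

lemma alpha_local_coord_le: "s \<in> {0..1} \<Longrightarrow> \<bar>alpha (piece s) (local_coord s)\<bar> \<le> c"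
  using alpha_le piece_bounds local_coord_mem by blast

lemma fractal_solution_unique:
  assumes G1: "fractal_solution N xs alpha h M G1" and G2: "fractal_solution N xs alpha h M G2"
  shows "G1 = G2"
proof -
  obtain B1 B2 where B1: "\<forall>y\<in>G1 ` {0..1}. norm y \<le> B1" and B2: "\<forall>y\<in>G2 ` {0..1}. norm y \<le> B2"
    using G1 G2 unfolding fractal_solution_def bounded_iff by blast
  have "G1 s - G2 s = 0" if "s \<in> {0..1}" for s
  proof (rule bounded_contracted_eq_0[where \<phi> = local_coord and D = "\<lambda>s. G1 s - G2 s" and B = "B1 + B2",
        OF c local_coord_mem])
    show "\<bar>G1 s - G2 s\<bar> \<le> B1 + B2" if "s \<in> {0..1}" for s
    proof -
      have "\<bar>G1 s\<bar> \<le> B1" "\<bar>G2 s\<bar> \<le> B2" using B1 B2 that by auto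
      then show ?thesis using abs_triangle_ineq4[of "G1 s" "G2 s"] by linarith
    qed
    show "\<bar>G1 s - G2 s\<bar> \<le> c * \<bar>G1 (local_coord s) - G2 (local_coord s)\<bar>" if s: "s \<in> {0..1}" for s
    proof -
      have "G1 s - G2 s = alpha (piece s) (local_coord s) * (G1 (local_coord s) - G2 (local_coord s))"
        using fractal_solution_at[OF G1 s] fractal_solution_at[OF G2 s] by (simp add: algebra_simps)
      then show ?thesis
        using alpha_local_coord_le[OF s] by (simp add: abs_mult mult_right_mono)
    qed
  qed (use that in auto)
  moreover have "G1 s = 0" "G2 s = 0" if "s \<notin> {0..1}" for s
    using G1 G2 that unfolding fractal_solution_def by auto
  ultimately show ?thesis by (metis eq_iff_diff_eq_0 ext)
qed

lemma fractal_perturbation_exists: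
  assumes M_0: "M 0 = h 0" and M_1: "M 1 = h 1" and R: "\<And>t. t \<in> {0..1} \<Longrightarrow> \<bar>h t - M t\<bar> \<le> R"
  obtains E where "\<And>s. s \<in> {0..1} \<Longrightarrow>
      E s = alpha (piece s) (local_coord s) * (E (local_coord s) + h (local_coord s) - M (local_coord s))"
    and "\<And>s. s \<in> {0..1} \<Longrightarrow> \<bar>E s\<bar> \<le> c * R / (1 - c)" and "E 0 = 0" and "E 1 = 0"
proof -
  define \<beta> where "\<beta> s = alpha (piece s) (local_coord s)" for s
  define \<gamma> where "\<gamma> s = \<beta> s * (h (local_coord s) - M (local_coord s))" for s
  have \<beta>_le: "\<bar>\<beta> s\<bar> \<le> c" if "s \<in> {0..1}" for s
    using alpha_local_coord_le[OF that] by (simp add: \<beta>_def)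
  have "\<bar>\<gamma> s\<bar> \<le> c * R" if "s \<in> {0..1}" for s
    unfolding \<gamma>_def abs_mult using \<beta>_le[OF that] R[OF local_coord_mem[OF that]] c
    by (intro mult_mono) auto
  with \<beta>_le obtain E where E: "\<And>s. s \<in> {0..1} \<Longrightarrow> E s = \<beta> s * E (local_coord s) + \<gamma> s"
    and E_bound: "\<And>s. s \<in> {0..1} \<Longrightarrow> \<bar>E s\<bar> \<le> c * R / (1 - c)"
    using affine_contraction_fixpoint[where \<phi> = local_coord and \<beta> = \<beta> and \<gamma> = \<gamma> and K = "c * R",
        OF c local_coord_mem]
    by blast
  have E_end: "E s = 0" if "s \<in> {0..1}" "local_coord s = s" "M s = h s" for s
  proof -
    have "(1 - \<beta> s) * E s = 0" using E[OF that(1)] that by (simp add: \<gamma>_def algebra_simps)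
    moreover have "\<bar>\<beta> s\<bar> < 1" using \<beta>_le[OF that(1)] c by simp
    ultimately show ?thesis by auto
  qed
  show thesis
  proof
    show "E s = alpha (piece s) (local_coord s) * (E (local_coord s) + h (local_coord s) - M (local_coord s))"
      if "s \<in> {0..1}" for s
      using E[OF that] by (simp add: \<beta>_def \<gamma>_def algebra_simps)
    show "E 0 = 0" "E 1 = 0"
      using E_end[of 0] E_end[of 1] local_coord_0 local_coord_1 M_0 M_1 by auto
  qed (rule E_bound)
qed

text \<open>The solution is \<open>h + E\<close>. A breakpoint is reached from two pieces, but there both sides
  of the equation vanish because \<open>E\<close> and \<open>h - M\<close> vanish at \<open>0\<close> and \<open>1\<close>.\<close>
lemma fractal_solution_exists:
  assumes h: "bounded (h ` {0..1})" and M_0: "M 0 = h 0" and M_1: "M 1 = h 1"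
    and R: "\<And>t. t \<in> {0..1} \<Longrightarrow> \<bar>h t - M t\<bar> \<le> R"
  obtains G where "fractal_solution N xs alpha h M G"
    and "\<And>t. t \<in> {0..1} \<Longrightarrow> \<bar>G t - h t\<bar> \<le> c * R / (1 - c)"
proof -
  obtain E where E: "\<And>s. s \<in> {0..1} \<Longrightarrow>
      E s = alpha (piece s) (local_coord s) * (E (local_coord s) + h (local_coord s) - M (local_coord s))"
    and E_bound: "\<And>s. s \<in> {0..1} \<Longrightarrow> \<bar>E s\<bar> \<le> c * R / (1 - c)" and "E 0 = 0" "E 1 = 0"
    using fractal_perturbation_exists[OF M_0 M_1 R] by blast
  define G where "G s = (if s \<in> {0..1} then h s + E s else 0)" for s
  have "G (affu xs i t) = h (affu xs i t) + alpha i t * (G t - M t)"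
    if i: "i \<in> {1..N-1}" and t: "t \<in> {0..1}" for i t
  proof -
    have s: "affu xs i t \<in> {0..1}" using affu_bounds[OF i t] by simp
    from piece_affu[OF i t] show ?thesis
    proof
      assume "piece (affu xs i t) = i \<and> local_coord (affu xs i t) = t"
      then show ?thesis using E[OF s] s t by (simp add: G_def algebra_simps)
    next
      assume "t = 0 \<and> 2 \<le> i \<and> piece (affu xs i t) = i - 1 \<and> local_coord (affu xs i t) = 1"
      then have "t = 0" "local_coord (affu xs i t) = 1" by blast+
      then show ?thesis using E[OF s] s \<open>E 0 = 0\<close> \<open>E 1 = 0\<close> M_0 M_1 by (simp add: G_def)
    qed
  qed
  moreover have "bounded (G ` {0..1})"
  proof -
    obtain Hb where Hb: "\<forall>y\<in>h ` {0..1}. norm y \<le> Hb" using h bounded_iff by blast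
    have "\<bar>G s\<bar> \<le> Hb + c * R / (1 - c)" if "s \<in> {0..1}" for s
    proof -
      have "\<bar>h s\<bar> \<le> Hb" using Hb that by auto
      then show ?thesis
        using E_bound[OF that] that abs_triangle_ineq[of "h s" "E s"] by (simp add: G_def)
    qed
    then show ?thesis unfolding bounded_iff by (intro exI[of _ "Hb + c * R / (1 - c)"]) auto
  qed
  ultimately have "fractal_solution N xs alpha h M G"
    unfolding fractal_solution_def by (simp add: G_def)
  then show thesis using that E_bound by (simp add: G_def)
qed

lemma The_fractal_solution_near:
  assumes "bounded (h ` {0..1})" and "M 0 = h 0" and "M 1 = h 1"
    and "\<And>t. t \<in> {0..1} \<Longrightarrow> \<bar>h t - M t\<bar> \<le> R" and "t \<in> {0..1}"
  shows "\<bar>(THE G. fractal_solution N xs alpha h M G) t - h t\<bar> \<le> c * R / (1 - c)"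
proof -
  obtain G where G: "fractal_solution N xs alpha h M G"
    and near: "\<And>t. t \<in> {0..1} \<Longrightarrow> \<bar>G t - h t\<bar> \<le> c * R / (1 - c)"
    using fractal_solution_exists assms(1-4) by metis
  have "(THE G. fractal_solution N xs alpha h M G) = G"
    using G fractal_solution_unique by blast
  then show ?thesis using near \<open>t \<in> {0..1}\<close> by simp
qed

lemma fractal_uniform_limit:
  fixes q :: "nat \<Rightarrow> real"
  assumes q_range: "\<And>n. 0 < q n \<and> q n \<le> 1" and q_lim: "q \<longlonglongrightarrow> 1"
    and h: "continuous_on {0..1} h"
  shows "uniform_limit {0..1} (\<lambda>n. fractal N xs alpha n (q n) h) h sequentially"
proof (rule uniform_limitI)
  fix \<eta> :: real assume "\<eta> > 0"
  define R where "R = \<eta> * (1 - c) / 2"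
  have "R > 0" using \<open>\<eta> > 0\<close> c by (simp add: R_def)
  have "c * R / (1 - c) = c * (\<eta> / 2)" using c by (simp add: R_def field_simps)
  also have "\<dots> \<le> \<eta> / 2" using c \<open>\<eta> > 0\<close> by (intro mult_left_le_one_le) auto
  finally have small: "c * R / (1 - c) < \<eta>" using \<open>\<eta> > 0\<close> by linarith
  have h_bounded: "bounded (h ` {0..1})"
    by (rule compact_imp_bounded[OF compact_continuous_image[OF h compact_Icc]])
  have "eventually (\<lambda>n. \<forall>x\<in>{0..1}. dist (MKZ n (q n) h x) (h x) < R) sequentially"
    using uniform_limitD[OF MKZ_uniform_limit[OF q_range q_lim h] \<open>R > 0\<close>] .
  then show "eventually (\<lambda>n. \<forall>x\<in>{0..1}. dist (fractal N xs alpha n (q n) h x) (h x) < \<eta>) sequentially"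
  proof eventually_elim
    case (elim n)
    have near: "\<bar>fractal N xs alpha n (q n) h x - h x\<bar> \<le> c * R / (1 - c)" if "x \<in> {0..1}" for x
      unfolding fractal_eq_The
    proof (rule The_fractal_solution_near[OF h_bounded _ _ _ that])
      show "MKZ n (q n) h 0 = h 0" using MKZ_at_0 q_range by blast
      show "MKZ n (q n) h 1 = h 1" by (rule MKZ_at_1)
      show "\<bar>h t - MKZ n (q n) h t\<bar> \<le> R" if "t \<in> {0..1}" for t
        using elim that by (simp add: dist_real_def abs_minus_commute less_imp_le)
    qed
    show ?case
      unfolding dist_real_def using le_less_trans[OF near small] by blast
  qed
qed

end

end

section \<open>Density of the fractal Muntz system\<close>

lemma uniform_limit_lincomb:
  fixes F :: "'n \<Rightarrow> 'j \<Rightarrow> 'a \<Rightarrow> real"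
  assumes "finite J" and "\<And>j. j \<in> J \<Longrightarrow> uniform_limit S (\<lambda>n. F n j) (b j) Fil"
  shows "uniform_limit S (\<lambda>n t. \<Sum>j\<in>J. c j * F n j t) (\<lambda>t. \<Sum>j\<in>J. c j * b j t) Fil"
  using assms by (induction J rule: finite_induct) (auto intro!: uniform_limit_intros)

lemma approx_by_span_transfer:
  fixes F :: "nat \<Rightarrow> nat \<Rightarrow> real \<Rightarrow> real"
  assumes f: "approx_by_span b f"
    and conv: "\<And>j. j \<ge> 1 \<Longrightarrow> uniform_limit {0..1} (\<lambda>n. F n j) (b j) sequentially"
    and "\<epsilon> > 0"
  shows "\<exists>n\<ge>1. \<exists>m\<ge>1. \<exists>c :: nat \<Rightarrow> real. \<forall>t\<in>{0..1}. \<bar>f t - (c 0 + (\<Sum>j=1..m. c j * F n j t))\<bar> < \<epsilon>"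
proof -
  obtain m0 c0 where approx: "\<forall>t\<in>{0..1}. \<bar>f t - (c0 0 + (\<Sum>j=1..m0. c0 j * b j t))\<bar> < \<epsilon> / 2"
    using f \<open>\<epsilon> > 0\<close> unfolding approx_by_span_def by (meson half_gt_zero)
  define m where "m = Suc m0"
  define c where "c = c0(m := 0)" \<comment> \<open>a zero coefficient, only to ensure \<open>m \<ge> 1\<close>\<close>
  have c_sum: "(\<Sum>j=1..m. c j * g j) = (\<Sum>j=1..m0. c0 j * g j)" for g :: "nat \<Rightarrow> real"
  proof -
    have "(\<Sum>j=1..m. c j * g j) = (\<Sum>j=1..m0. c j * g j)" by (simp add: m_def c_def)
    also have "\<dots> = (\<Sum>j=1..m0. c0 j * g j)" by (rule sum.cong) (auto simp: c_def m_def)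
    finally show ?thesis .
  qed
  have "c 0 = c0 0" by (simp add: c_def m_def)
  have "uniform_limit {0..1} (\<lambda>n t. c 0 + (\<Sum>j\<in>{1..m}. c j * F n j t))
      (\<lambda>t. c 0 + (\<Sum>j\<in>{1..m}. c j * b j t)) sequentially"
    using conv by (intro uniform_limit_add uniform_limit_const uniform_limit_lincomb) auto
  from uniform_limitD[OF this, of "\<epsilon> / 2"] \<open>\<epsilon> > 0\<close>
  have "eventually (\<lambda>n. 1 \<le> n \<and> (\<forall>t\<in>{0..1}.
      dist (c 0 + (\<Sum>j=1..m. c j * F n j t)) (c 0 + (\<Sum>j=1..m. c j * b j t)) < \<epsilon> / 2)) sequentially"
    by (intro eventually_conj eventually_ge_at_top) simp_all
  then obtain n where n: "1 \<le> n"
    and close: "\<forall>t\<in>{0..1}. dist (c 0 + (\<Sum>j=1..m. c j * F n j t)) (c 0 + (\<Sum>j=1..m. c j * b j t)) < \<epsilon> / 2"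
    unfolding eventually_sequentially by blast
  have "\<bar>f t - (c 0 + (\<Sum>j=1..m. c j * F n j t))\<bar> < \<epsilon>" if t: "t \<in> {0..1}" for t
  proof -
    have "\<bar>f t - (c 0 + (\<Sum>j=1..m. c j * b j t))\<bar> < \<epsilon> / 2"
      using approx t unfolding c_sum \<open>c 0 = c0 0\<close> by blast
    moreover have "\<bar>(c 0 + (\<Sum>j=1..m. c j * F n j t)) - (c 0 + (\<Sum>j=1..m. c j * b j t))\<bar> < \<epsilon> / 2"
      using close t by (simp add: dist_real_def)
    ultimately show ?thesis by linarith
  qed
  moreover have "1 \<le> m" by (simp add: m_def)
  ultimately show ?thesis using n by blast
qed

theorem theorem5p2:
  fixes N :: nat and xs :: "nat \<Rightarrow> real" and q :: "nat \<Rightarrow> real"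
    and alpha :: "nat \<Rightarrow> real \<Rightarrow> real" and lam :: "nat \<Rightarrow> real"
  assumes N: "N \<ge> 2"
    and xs0: "xs 1 = 0" and xsN: "xs N = 1"
    and xs_mono: "\<And>i. 1 \<le> i \<Longrightarrow> i < N \<Longrightarrow> xs i < xs (Suc i)"
    and q_range: "\<And>n. 0 < q n \<and> q n \<le> 1"
    and q_lim: "q \<longlonglongrightarrow> 1"
    and alpha_bd: "\<And>i. i \<in> {1..N-1} \<Longrightarrow> \<exists>c<1. \<forall>t\<in>{0..1}. \<bar>alpha i t\<bar> \<le> c"
    and lam_distinct: "inj_on lam {1..}"
    and lam_pos: "\<And>i. i \<ge> 1 \<Longrightarrow> lam i > 0"
    and lam_inf: "\<exists>\<delta>>0. \<forall>i\<ge>1. lam i \<ge> \<delta>"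
    and lam_div: "\<not> summable (\<lambda>i. 1 / lam (Suc i))"
  shows "\<forall>f. continuous_on {0..1} f \<longrightarrow> (\<forall>\<epsilon>>0. \<exists>n\<ge>1. \<exists>m\<ge>1. \<exists>c :: nat \<Rightarrow> real.
           \<forall>t\<in>{0..1}. \<bar>f t - (c 0 + (\<Sum>j=1..m.
              c j * fractal N xs alpha n (q n) (\<lambda>s. s powr lam j) t))\<bar> < \<epsilon>)"
proof (intro allI impI)
  fix f :: "real \<Rightarrow> real" and \<epsilon> :: real
  assume f: "continuous_on {0..1} f" and "\<epsilon> > 0"
  interpret interval_partition N xs
    by unfold_locales (fact N xs0 xsN xs_mono)+
  obtain c where c: "0 \<le> c" "c < 1"
    and alpha_le: "\<And>i t. i \<in> {1..N-1} \<Longrightarrow> t \<in> {0..1} \<Longrightarrow> \<bar>alpha i t\<bar> \<le> c"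
    using uniform_contraction_bound[where a = alpha and I = "{1..N-1}", OF finite_atLeastAtMost alpha_bd]
    by blast
  have "approx_by_span (\<lambda>j t. t powr lam j) f"
    using lam_distinct lam_pos lam_inf lam_div f by (rule approx_by_span_muntz)
  moreover have "uniform_limit {0..1} (\<lambda>n. fractal N xs alpha n (q n) (\<lambda>s. s powr lam j))
      (\<lambda>t. t powr lam j) sequentially" if "j \<ge> 1" for j
  proof (rule fractal_uniform_limit[OF c alpha_le q_range q_lim])
    show "continuous_on {0..1} (\<lambda>s. s powr lam j)"
      using lam_pos[OF that] by (intro continuous_on_powr') (auto intro: continuous_intros)
  qed
  ultimately show "\<exists>n\<ge>1. \<exists>m\<ge>1. \<exists>c :: nat \<Rightarrow> real. \<forall>t\<in>{0..1}. \<bar>f t - (c 0 + (\<Sum>j=1..m.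
      c j * fractal N xs alpha n (q n) (\<lambda>s. s powr lam j) t))\<bar> < \<epsilon>"
    using approx_by_span_transfer[where F = "\<lambda>n j. fractal N xs alpha n (q n) (\<lambda>s. s powr lam j)"]
      \<open>\<epsilon> > 0\<close> by blast
qed

end
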